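(* Let $\rho$ be a density matrix on $\mathcal{H}_{m_A}\otimes\mathcal{H}_{m_B}$. The following are equivalent: (i) there exist projections $P_A:\mathcal{H}_{m_A}\to\mathcal{H}_2$ and $P_B:\mathcal{H}_{m_B}\to\mathcal{H}_2$ such that $(P_A\otimes P_B)\rho(P_A^\dagger\otimes P_B^\dagger)$ is entangled; (ii) there exists a projection $P_A:\mathcal{H}_{m_A}\to\mathcal{H}_2$ such that $\rho_{2\otimes m_B}=(P_A\otimes\mathbf{1}_B)\rho(P_A^\dagger\otimes\mathbf{1}_B)$ satisfies $\rho_{2\otimes m_B}^{PT}\not\ge0$; (iii) there exists a vector $|\phi\rangle\in\mathcal{H}_{m_A}\otimes\mathcal{H}_{m_B}$ of Schmidt rank two with $\langle\phi|\rho^{PT}|\phi\rangle<0$.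
   Context: $\mathcal{H}_k$ denotes a $k$-dimensional Hilbert space. A projection $P:\mathcal{H}_m\to\mathcal{H}_2$ means a map of the form $P=|0\rangle\langle\alpha_0|+|1\rangle\langle\alpha_1|$ with $|\alpha_0\rangle,|\alpha_1\rangle$ orthonormal. A bipartite (possibly unnormalized) positive operator is entangled if it is not separable, i.e. not a nonnegative combination of products $|\alpha\rangle\langle\alpha|\otimes|\beta\rangle\langle\beta|$. $\rho^{PT}$ denotes the partial transpose on the second (Bob's) factor: $\langle ij|\rho^{PT}|kl\rangle=\langle il|\rho|kj\rangle$. A vector has Schmidt rank $k$ if its Schmidt decomposition has exactly $k$ nonzero terms. *)

theory Defs
  imports Complex_Main "HOL-Library.Numeral_Type" "HOL-Library.Complex_Order"
begin

text \<open>Operators between finite-dimensional Hilbert spaces are represented by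
their matrices w.r.t. the computational bases, indexed by finite types:
an operator from the space indexed by 'y to the space indexed by 'x is a
function M :: 'x => 'y => complex with M x y = <x|M|y>.  H_2 is indexed by the type 2; a bipartite space by a pair type.\<close>

type_synonym ('x, 'y) op = "'x \<Rightarrow> 'y \<Rightarrow> complex"

definition inner_c :: "('x::finite \<Rightarrow> complex) \<Rightarrow> ('x \<Rightarrow> complex) \<Rightarrow> complex" where
  "inner_c u v = (\<Sum>x\<in>UNIV. cnj (u x) * v x)"

definition expval :: "('x::finite, 'x) op \<Rightarrow> ('x \<Rightarrow> complex) \<Rightarrow> complex" where
  "expval A v = (\<Sum>x\<in>UNIV. \<Sum>y\<in>UNIV. cnj (v x) * A x y * v y)"

definition psd :: "('x::finite, 'x) op \<Rightarrow> bool" where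
  "psd A \<longleftrightarrow> (\<forall>v. 0 \<le> expval A v)"

definition trace_c :: "('x::finite, 'x) op \<Rightarrow> complex" where
  "trace_c A = (\<Sum>x\<in>UNIV. A x x)"

definition density_matrix :: "('x::finite, 'x) op \<Rightarrow> bool" where
  "density_matrix \<rho> \<longleftrightarrow> psd \<rho> \<and> trace_c \<rho> = 1"

definition orthonormal2 :: "('x::finite \<Rightarrow> complex) \<Rightarrow> ('x \<Rightarrow> complex) \<Rightarrow> bool" where
  "orthonormal2 a0 a1 \<longleftrightarrow> inner_c a0 a0 = 1 \<and> inner_c a1 a1 = 1 \<and> inner_c a0 a1 = 0"

text \<open>The projection P = |0><a0| + |1><a1| : H_m -> H_2.\<close>
definition proj2 :: "('x \<Rightarrow> complex) \<Rightarrow> ('x \<Rightarrow> complex) \<Rightarrow> (2, 'x) op" where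
  "proj2 a0 a1 = (\<lambda>i x. if i = 0 then cnj (a0 x) else cnj (a1 x))"

definition is_projection :: "(2, 'x::finite) op \<Rightarrow> bool" where
  "is_projection P \<longleftrightarrow> (\<exists>a0 a1. orthonormal2 a0 a1 \<and> P = proj2 a0 a1)"

definition tensor_op :: "('x, 'y) op \<Rightarrow> ('u, 'w) op \<Rightarrow> ('x \<times> 'u, 'y \<times> 'w) op" where
  "tensor_op M N = (\<lambda>(x, u) (y, w). M x y * N u w)"

definition id_op :: "('x, 'x) op" where
  "id_op = (\<lambda>x y. if x = y then 1 else 0)"

definition sandwich :: "('x, 'y::finite) op \<Rightarrow> ('y, 'y) op \<Rightarrow> ('x, 'x) op" where
  "sandwich M \<rho> = (\<lambda>x x'. \<Sum>y\<in>UNIV. \<Sum>y'\<in>UNIV. M x y * \<rho> y y' * cnj (M x' y'))"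

definition partial_transpose :: "('a \<times> 'b, 'a \<times> 'b) op \<Rightarrow> ('a \<times> 'b, 'a \<times> 'b) op" where
  "partial_transpose \<rho> = (\<lambda>(i, j) (k, l). \<rho> (i, l) (k, j))"

definition separable :: "('a \<times> 'b, 'a \<times> 'b) op \<Rightarrow> bool" where
  "separable \<rho> \<longleftrightarrow> (\<exists>(n::nat) (c::nat \<Rightarrow> real) (a::nat \<Rightarrow> 'a \<Rightarrow> complex) (b::nat \<Rightarrow> 'b \<Rightarrow> complex).
      (\<forall>t<n. 0 \<le> c t) \<and>
      \<rho> = (\<lambda>(i, k) (j, l). \<Sum>t<n. complex_of_real (c t) * a t i * cnj (a t j) * b t k * cnj (b t l)))"

definition entangled :: "('a::finite \<times> 'b::finite, 'a \<times> 'b) op \<Rightarrow> bool" where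
  "entangled \<rho> \<longleftrightarrow> psd \<rho> \<and> \<not> separable \<rho>"

definition schmidt_rank :: "nat \<Rightarrow> ('a::finite \<times> 'b::finite \<Rightarrow> complex) \<Rightarrow> bool" where
  "schmidt_rank k \<phi> \<longleftrightarrow> (\<exists>(s::nat \<Rightarrow> real) (a::nat \<Rightarrow> 'a \<Rightarrow> complex) (b::nat \<Rightarrow> 'b \<Rightarrow> complex).
      (\<forall>t<k. 0 < s t) \<and>
      (\<forall>t<k. \<forall>t'<k. inner_c (a t) (a t') = (if t = t' then 1 else 0)) \<and>
      (\<forall>t<k. \<forall>t'<k. inner_c (b t) (b t') = (if t = t' then 1 else 0)) \<and>
      \<phi> = (\<lambda>(i, j). \<Sum>t<k. complex_of_real (s t) * a t i * b t j))"

end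

theory Submission
  imports Defs
begin

text \<open>
  (ii) \<longleftrightarrow> (iii): the partial transpose commutes with local maps on Alice's side, so
  \<open>(P\<^sub>A \<otimes> 1) \<rho>^PT (P\<^sub>A \<otimes> 1)\<^sup>\<dagger>\<close> is the partial transpose of \<open>\<rho>_{2\<otimes>m}\<close>.
  A vector witnessing that \<open>\<rho>_{2\<otimes>m}^PT\<close> is not positive cannot be a product vector, so it has
  Schmidt rank two, and the isometry \<open>P\<^sub>A\<^sup>\<dagger>\<close> carries it to a Schmidt-rank-two witness for \<open>\<rho>^PT\<close>;
  conversely \<open>P\<^sub>A\<close> projects onto the span of Alice's Schmidt vectors of such a witness.
  (ii) \<longrightarrow> (i): projecting Bob's side onto the conjugates of Bob's Schmidt vectors of the witness keeps
  the negative expectation, so the resulting two-qubit state has a non-positive partial transpose and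
  is entangled.  (i) \<longrightarrow> (ii): for two qubits a positive partial transpose implies separability.

  This two-qubit criterion is proved constructively.  If some product vector has zero expectation in a
  PPT state \<open>\<tau>\<close>, local changes of basis make \<open>\<tau>(01,01) = 0\<close>, and \<open>\<tau>\<close> splits explicitly into
  product terms; a two-dimensional kernel always contains a product vector (a quadratic equation).
  Otherwise a filter on Bob's side brings \<open>\<tau>\<close> to the form \<open>[[1, B], [B\<^sup>\<dagger>, C]]\<close>, and positivity of
  \<open>\<tau>\<close> and of \<open>\<tau>^PT\<close> says that the Schur complements \<open>C - B\<^sup>\<dagger>B\<close> and \<open>C - BB\<^sup>\<dagger>\<close> are positive.
  Removing a common positive part \<open>G\<close> of both (the separable term \<open>|1\<rangle>\<langle>1| \<otimes> G\<close>) makes one of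
  them vanish, which yields a two-dimensional kernel, or both of rank one; then a suitable product vector
  can be subtracted keeping \<open>\<tau>\<close> and \<open>\<tau>^PT\<close> positive, which again leaves a two-dimensional kernel.
\<close>

section \<open>Operators, positivity and separability\<close>

definition op_mult :: "('x, 'y::finite) op \<Rightarrow> ('y, 'z) op \<Rightarrow> ('x, 'z) op" where
  "op_mult M N = (\<lambda>x z. \<Sum>y\<in>UNIV. M x y * N y z)"

definition adjoint :: "('x, 'y) op \<Rightarrow> ('y, 'x) op" where
  "adjoint M = (\<lambda>y x. cnj (M x y))"

definition op_apply :: "('x, 'y::finite) op \<Rightarrow> ('y \<Rightarrow> complex) \<Rightarrow> ('x \<Rightarrow> complex)" where
  "op_apply M v = (\<lambda>x. \<Sum>y\<in>UNIV. M x y * v y)"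

definition outer :: "('x \<Rightarrow> complex) \<Rightarrow> ('y \<Rightarrow> complex) \<Rightarrow> ('x, 'y) op" where
  "outer u v = (\<lambda>x y. u x * cnj (v y))"

definition ket :: "'x \<Rightarrow> ('x \<Rightarrow> complex)" where
  "ket x = (\<lambda>z. if z = x then 1 else 0)"

definition tensor_vec :: "('a \<Rightarrow> complex) \<Rightarrow> ('b \<Rightarrow> complex) \<Rightarrow> ('a \<times> 'b \<Rightarrow> complex)" where
  "tensor_vec a b = (\<lambda>(i, j). a i * b j)"

definition conj_vec :: "('x \<Rightarrow> complex) \<Rightarrow> ('x \<Rightarrow> complex)" where
  "conj_vec v = (\<lambda>x. cnj (v x))"

definition conj_op :: "('x, 'y) op \<Rightarrow> ('x, 'y) op" where
  "conj_op M = (\<lambda>x y. cnj (M x y))"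

lemma sum_UNIV_prod:
  "(\<Sum>x\<in>(UNIV::('a::finite \<times> 'b::finite) set). f x) = (\<Sum>i\<in>UNIV. \<Sum>j\<in>UNIV. f (i, j))"
  by (simp add: sum.cartesian_product)

lemma sum_swap3:
  "(\<Sum>x\<in>A. \<Sum>y\<in>B. \<Sum>z\<in>C. f x y z) = (\<Sum>z\<in>C. \<Sum>y\<in>B. \<Sum>x\<in>A. f x y z)"
proof -
  have "(\<Sum>x\<in>A. \<Sum>y\<in>B. \<Sum>z\<in>C. f x y z) = (\<Sum>y\<in>B. \<Sum>z\<in>C. \<Sum>x\<in>A. f x y z)"
    by (subst sum.swap) (rule sum.cong[OF refl], rule sum.swap)
  also have "\<dots> = (\<Sum>z\<in>C. \<Sum>y\<in>B. \<Sum>x\<in>A. f x y z)"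
    by (rule sum.swap)
  finally show ?thesis .
qed

lemma sum_swap3_rotate:
  "(\<Sum>x\<in>A. \<Sum>y\<in>B. \<Sum>z\<in>C. f x y z) = (\<Sum>z\<in>C. \<Sum>x\<in>A. \<Sum>y\<in>B. f x y z)"
proof -
  have "(\<Sum>x\<in>A. \<Sum>y\<in>B. \<Sum>z\<in>C. f x y z) = (\<Sum>x\<in>A. \<Sum>z\<in>C. \<Sum>y\<in>B. f x y z)"
    by (rule sum.cong[OF refl], rule sum.swap)
  also have "\<dots> = (\<Sum>z\<in>C. \<Sum>x\<in>A. \<Sum>y\<in>B. f x y z)"
    by (rule sum.swap)
  finally show ?thesis .
qed

lemma sum_swap4:
  "(\<Sum>x\<in>A. \<Sum>x'\<in>B. \<Sum>y\<in>C. \<Sum>y'\<in>D. f x x' y y') = (\<Sum>y\<in>C. \<Sum>y'\<in>D. \<Sum>x\<in>A. \<Sum>x'\<in>B. f x x' y y')"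
proof -
  have "(\<Sum>x\<in>A. \<Sum>x'\<in>B. \<Sum>y\<in>C. \<Sum>y'\<in>D. f x x' y y') = (\<Sum>x\<in>A. \<Sum>y\<in>C. \<Sum>y'\<in>D. \<Sum>x'\<in>B. f x x' y y')"
    by (rule sum.cong[OF refl], rule sum_swap3_rotate[symmetric])
  also have "\<dots> = (\<Sum>y\<in>C. \<Sum>y'\<in>D. \<Sum>x\<in>A. \<Sum>x'\<in>B. f x x' y y')"
    by (rule sum_swap3_rotate[symmetric])
  finally show ?thesis .
qed

lemma op_eqI:
  fixes f g :: "('a \<times> 'b, 'c \<times> 'd) op"
  assumes "\<And>i j k l. f (i, j) (k, l) = g (i, j) (k, l)"
  shows "f = g"
  using assms by (intro ext) auto

lemma partial_transpose_apply [simp]: "partial_transpose \<rho> (i, j) (k, l) = \<rho> (i, l) (k, j)"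
  by (simp add: partial_transpose_def)

lemma tensor_op_apply [simp]: "tensor_op M N (x, u) (y, w) = M x y * N u w"
  by (simp add: tensor_op_def)

lemma tensor_vec_apply [simp]: "tensor_vec a b (i, j) = a i * b j"
  by (simp add: tensor_vec_def)

lemma partial_transpose_involution [simp]: "partial_transpose (partial_transpose \<rho>) = \<rho>"
  by (rule op_eqI) simp

lemma cnj_mult_self: "cnj z * z = complex_of_real ((cmod z)\<^sup>2)"
  using complex_norm_square[of z] by (simp add: mult.commute)

lemma cnj_mult_self_nonneg: "0 \<le> cnj z * z"
  by (auto simp: less_eq_complex_def)

lemma inner_c_commute_cnj: "inner_c x y = cnj (inner_c y x)"
  by (simp add: inner_c_def cnj_sum mult.commute)

lemma inner_c_scale_right: "inner_c x (\<lambda>j. c * y j) = c * inner_c x y"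
  by (simp add: inner_c_def sum_distrib_left mult_ac)

lemma inner_c_scale_left: "inner_c (\<lambda>j. c * x j) y = cnj c * inner_c x y"
  by (simp add: inner_c_def sum_distrib_left mult_ac)

lemma inner_c_conj_vec: "inner_c (conj_vec x) (conj_vec y) = cnj (inner_c x y)"
  by (simp add: inner_c_def conj_vec_def cnj_sum mult.commute)

lemma inner_c_add_left: "inner_c (\<lambda>j. x j + y j) z = inner_c x z + inner_c y z"
  by (simp add: inner_c_def distrib_right sum.distrib)

lemma inner_c_add_right: "inner_c z (\<lambda>j. x j + y j) = inner_c z x + inner_c z y"
  by (simp add: inner_c_def distrib_left sum.distrib)

lemma inner_c_self: "inner_c x x = of_real (\<Sum>j\<in>UNIV. (cmod (x j))\<^sup>2)"
  by (simp add: inner_c_def cnj_mult_self)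

lemma inner_c_self_eq_0:
  fixes x :: "'x::finite \<Rightarrow> complex"
  assumes "inner_c x x = 0" shows "x = (\<lambda>_. 0)"
proof -
  have "(\<Sum>j\<in>UNIV. (cmod (x j))\<^sup>2) = 0" using assms inner_c_self[of x] of_real_eq_0_iff by metis
  then have "\<forall>j\<in>UNIV. (cmod (x j))\<^sup>2 = 0" by (subst sum_nonneg_eq_0_iff[symmetric]) auto
  then show ?thesis by auto
qed

lemma expval_eq_inner: "expval A v = inner_c v (op_apply A v)"
  by (simp add: expval_def inner_c_def op_apply_def sum_distrib_left mult.assoc)

lemma expval_sandwich: "expval (sandwich M \<rho>) v = expval \<rho> (op_apply (adjoint M) v)"
proof -
  have "expval (sandwich M \<rho>) v =
    (\<Sum>x\<in>UNIV. \<Sum>x'\<in>UNIV. \<Sum>y\<in>UNIV. \<Sum>y'\<in>UNIV. (cnj (v x) * M x y) * \<rho> y y' * (cnj (M x' y') * v x'))"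
    by (simp add: expval_def sandwich_def sum_distrib_left sum_distrib_right mult.assoc)
  also have "\<dots> = (\<Sum>y\<in>UNIV. \<Sum>y'\<in>UNIV. \<Sum>x\<in>UNIV. \<Sum>x'\<in>UNIV. (cnj (v x) * M x y) * \<rho> y y' * (cnj (M x' y') * v x'))"
    by (rule sum_swap4)
  also have "\<dots> = expval \<rho> (op_apply (adjoint M) v)"
    by (simp add: expval_def op_apply_def adjoint_def sum_distrib_left sum_distrib_right mult_ac cnj_sum)
  finally show ?thesis .
qed

lemma psd_sandwich: "psd \<rho> \<Longrightarrow> psd (sandwich M \<rho>)"
  by (simp add: psd_def expval_sandwich)

lemma expval_add: "expval (\<lambda>x y. A x y + B x y) v = expval A v + expval B v"
  by (simp add: expval_def distrib_left distrib_right sum.distrib)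

lemma expval_diff: "expval (\<lambda>x y. A x y - B x y) v = expval A v - expval B v"
  by (simp add: expval_def right_diff_distrib left_diff_distrib sum_subtractf)

lemma expval_scale: "expval (\<lambda>x y. c * A x y) v = c * expval A v"
  by (simp add: expval_def sum_distrib_left mult_ac)

lemma expval_outer: "expval (outer u u) v = cnj (inner_c u v) * inner_c u v"
  unfolding expval_def outer_def inner_c_def
  by (simp add: sum_distrib_left sum_distrib_right cnj_sum) (subst sum.swap, simp add: mult_ac)

lemma psd_add: "psd A \<Longrightarrow> psd B \<Longrightarrow> psd (\<lambda>x y. A x y + B x y)"
  by (simp add: psd_def expval_add add_nonneg_nonneg)

lemma psd_scale: "psd A \<Longrightarrow> 0 \<le> c \<Longrightarrow> psd (\<lambda>x y. complex_of_real c * A x y)"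
  unfolding psd_def by (auto simp: expval_scale less_eq_complex_def intro!: mult_nonneg_nonneg)

lemma psd_outer: "psd (outer u u)"
  unfolding psd_def expval_outer by (simp add: cnj_mult_self_nonneg)

lemma psd_zero: "psd (\<lambda>x y. 0)"
  by (simp add: psd_def expval_def)

lemma sum_mult_ket [simp]: "(\<Sum>u\<in>UNIV. f u * ket x u) = f (x::'x::finite)"
proof -
  have "(\<Sum>u\<in>UNIV. f u * ket x u) = (\<Sum>u\<in>UNIV. if u = x then f x else 0)"
    by (rule sum.cong) (auto simp: ket_def)
  then show ?thesis by simp
qed

lemma sum_ket_mult [simp]: "(\<Sum>u\<in>UNIV. ket x u * f u) = f (x::'x::finite)"
  using sum_mult_ket[of f x] by (simp add: mult.commute)

lemma cnj_ket [simp]: "cnj (ket x u) = ket x u"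
  by (simp add: ket_def)

lemma sum_mult_scaled_ket [simp]: "(\<Sum>u\<in>UNIV. f u * (c * ket x u)) = f (x::'x::finite) * c"
  using sum_mult_ket[of "\<lambda>u. f u * c" x] by (simp only: mult.assoc)

lemma sum_scaled_ket_mult [simp]: "(\<Sum>u\<in>UNIV. (c * ket x u) * f u) = c * f (x::'x::finite)"
  using sum_mult_scaled_ket[of f c x] by (simp add: mult.commute)

lemma expval_ket: "expval A (ket x) = A x x"
  by (simp add: expval_def)

lemma expval_two_kets:
  fixes A :: "('x::finite, 'x) op"
  shows "expval A (\<lambda>z. a * ket x z + b * ket y z) =
     cnj a * A x x * a + cnj a * A x y * b + cnj b * A y x * a + cnj b * A y y * b"
proof -
  have "op_apply A (\<lambda>z. a * ket x z + b * ket y z) = (\<lambda>u. A u x * a + A u y * b)"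
    unfolding op_apply_def by (simp only: distrib_left sum.distrib sum_mult_scaled_ket)
  moreover have "inner_c (\<lambda>z. a * ket x z + b * ket y z) w = cnj a * w x + cnj b * w y" for w
    unfolding inner_c_def by (simp add: distrib_right sum.distrib)
  ultimately show ?thesis
    by (simp add: expval_eq_inner algebra_simps)
qed

lemma psd_diag_nonneg: "psd A \<Longrightarrow> 0 \<le> A x x"
  unfolding psd_def by (metis expval_ket)

lemma psd_hermitian:
  fixes A :: "('x::finite, 'x) op"
  assumes "psd A"
  shows "A x y = cnj (A y x)"
proof (cases "x = y")
  case True
  then show ?thesis using psd_diag_nonneg[OF assms, of x]
    by (simp add: complex_eq_iff less_eq_complex_def)
next
  case False
  have dx: "Im (A x x) = 0" and dy: "Im (A y y) = 0"
    using psd_diag_nonneg[OF assms] by (auto simp: less_eq_complex_def)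
  have "0 \<le> expval A (\<lambda>z. 1 * ket x z + 1 * ket y z)" using assms psd_def by blast
  then have "Im (A x y + A y x) = 0"
    using dx dy by (simp only: expval_two_kets) (simp add: less_eq_complex_def)
  moreover have "0 \<le> expval A (\<lambda>z. 1 * ket x z + \<i> * ket y z)" using assms psd_def by blast
  then have "Re (A x y) = Re (A y x)"
    using dx dy by (simp only: expval_two_kets) (simp add: less_eq_complex_def)
  ultimately show ?thesis by (simp add: complex_eq_iff)
qed

lemma psd_zero_diag_row:
  fixes A :: "('x::finite, 'x) op"
  assumes "psd A" and "A x x = 0"
  shows "A x y = 0"
proof (rule ccontr)
  assume nz: "A x y \<noteq> 0"
  define c where "c = A x y"
  have hyx: "A y x = cnj c" using psd_hermitian[OF assms(1), of y x] c_def by simp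
  have "0 \<le> A y y" by (rule psd_diag_nonneg[OF assms(1)])
  then have dy: "A y y = of_real (Re (A y y))" by (simp add: complex_eq_iff less_eq_complex_def)
  \<comment> \<open>test vector \<open>-t c |x\<rangle> + |y\<rangle>\<close> with \<open>t\<close> so large that the expectation becomes \<open>-1\<close>\<close>
  define t :: real where "t = (Re (A y y) + 1) / (2 * (cmod c)\<^sup>2)"
  have "0 < (cmod c)\<^sup>2" using nz c_def by simp
  then have t: "- 2 * t * (cmod c)\<^sup>2 + Re (A y y) = -1" by (simp add: t_def field_simps)
  have "expval A (\<lambda>z. (- of_real t * c) * ket x z + 1 * ket y z) =
      - of_real t * (cnj c * c) - of_real t * (cnj c * c) + A y y"
    unfolding expval_two_kets using assms(2) hyx c_def by (simp add: algebra_simps)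
  also have "\<dots> = of_real (- 2 * t * (cmod c)\<^sup>2 + Re (A y y))"
    by (subst dy) (simp add: cnj_mult_self)
  also have "\<dots> = -1" unfolding t by simp
  finally have "expval A (\<lambda>z. (- of_real t * c) * ket x z + 1 * ket y z) = -1" .
  moreover have "0 \<le> expval A (\<lambda>z. (- of_real t * c) * ket x z + 1 * ket y z)"
    using assms(1) psd_def by blast
  ultimately show False by (simp add: less_eq_complex_def)
qed

lemma sandwich_sandwich: "sandwich M (sandwich M' \<rho>) = sandwich (op_mult M M') \<rho>"
proof (intro ext)
  fix x x'
  have "sandwich M (sandwich M' \<rho>) x x' = (\<Sum>y\<in>UNIV. \<Sum>y'\<in>UNIV. \<Sum>z\<in>UNIV. \<Sum>z'\<in>UNIV.
      M x y * M' y z * \<rho> z z' * cnj (M' y' z') * cnj (M x' y'))"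
    by (simp add: sandwich_def sum_distrib_left sum_distrib_right mult_ac)
  also have "\<dots> = (\<Sum>z\<in>UNIV. \<Sum>z'\<in>UNIV. \<Sum>y\<in>UNIV. \<Sum>y'\<in>UNIV.
      M x y * M' y z * \<rho> z z' * cnj (M' y' z') * cnj (M x' y'))"
    by (rule sum_swap4)
  also have "\<dots> = sandwich (op_mult M M') \<rho> x x'"
    by (simp add: sandwich_def op_mult_def sum_distrib_left sum_distrib_right mult_ac)
  finally show "sandwich M (sandwich M' \<rho>) x x' = sandwich (op_mult M M') \<rho> x x'" .
qed

lemma op_mult_tensor: "op_mult (tensor_op M N) (tensor_op M' N') = tensor_op (op_mult M M') (op_mult N N')"
  by (rule op_eqI) (simp add: op_mult_def sum_UNIV_prod sum_product mult_ac)

lemma id_op_ket: "id_op x = ket x" "(\<lambda>y. id_op y x) = ket x"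
  by (auto simp: id_op_def ket_def fun_eq_iff)

lemma sandwich_id: "sandwich id_op \<rho> = (\<rho> :: ('x::finite, 'x) op)"
  by (intro ext) (simp add: sandwich_def id_op_ket(1))

lemma tensor_op_id: "tensor_op (id_op :: ('a,'a) op) (id_op :: ('b,'b) op) = id_op"
  by (rule op_eqI) (simp add: id_op_def)

lemma op_mult_id_left: "op_mult id_op M = (M :: ('x::finite, 'y) op)"
  by (intro ext) (simp add: op_mult_def id_op_ket)

lemma op_mult_id_right: "op_mult M id_op = (M :: ('x, 'y::finite) op)"
  by (intro ext) (simp add: op_mult_def id_op_def ket_def if_distrib cong: if_cong)

lemma partial_transpose_sandwich:
  fixes \<rho> :: "('a::finite \<times> 'b::finite, 'a \<times> 'b) op"
  shows "partial_transpose (sandwich (tensor_op M N) \<rho>) = sandwich (tensor_op M (conj_op N)) (partial_transpose \<rho>)"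
proof (rule op_eqI)
  fix i j k l
  have L: "partial_transpose (sandwich (tensor_op M N) \<rho>) (i, j) (k, l) =
    (\<Sum>a\<in>UNIV. \<Sum>b\<in>UNIV. \<Sum>c\<in>UNIV. \<Sum>d\<in>UNIV. M i a * N l b * \<rho> (a, b) (c, d) * cnj (M k c) * cnj (N j d))"
    by (simp add: sandwich_def sum_UNIV_prod sum_distrib_left sum_distrib_right mult_ac)
  have R: "sandwich (tensor_op M (conj_op N)) (partial_transpose \<rho>) (i, j) (k, l) =
    (\<Sum>a\<in>UNIV. \<Sum>b\<in>UNIV. \<Sum>c\<in>UNIV. \<Sum>d\<in>UNIV. M i a * cnj (N j b) * \<rho> (a, d) (c, b) * cnj (M k c) * N l d)"
    by (simp add: sandwich_def sum_UNIV_prod sum_distrib_left sum_distrib_right mult_ac conj_op_def)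
  have X: "(\<Sum>b\<in>UNIV. \<Sum>c\<in>UNIV. \<Sum>d\<in>UNIV. M i a * cnj (N j b) * \<rho> (a, d) (c, b) * cnj (M k c) * N l d) =
     (\<Sum>d\<in>UNIV. \<Sum>c\<in>UNIV. \<Sum>b\<in>UNIV. M i a * cnj (N j b) * \<rho> (a, d) (c, b) * cnj (M k c) * N l d)" for a
    by (rule sum_swap3)
  show "partial_transpose (sandwich (tensor_op M N) \<rho>) (i, j) (k, l) =
      sandwich (tensor_op M (conj_op N)) (partial_transpose \<rho>) (i, j) (k, l)"
    unfolding L R X by (simp add: mult_ac)
qed

lemma op_apply_tensor: "op_apply (tensor_op M N) (tensor_vec a b) = tensor_vec (op_apply M a) (op_apply N b)"
  by (intro ext) (auto simp: op_apply_def sum_UNIV_prod sum_product mult_ac)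

lemma sandwich_outer_sum:
  "sandwich T (\<lambda>x y. \<Sum>t\<in>S. c t * outer (u t) (u t) x y) =
   (\<lambda>x y. \<Sum>t\<in>S. c t * outer (op_apply T (u t)) (op_apply T (u t)) x y)"
proof (intro ext)
  fix x x'
  have "sandwich T (\<lambda>x y. \<Sum>t\<in>S. c t * outer (u t) (u t) x y) x x' =
     (\<Sum>y\<in>UNIV. \<Sum>y'\<in>UNIV. \<Sum>t\<in>S. c t * (T x y * u t y) * cnj (T x' y' * u t y'))"
    by (simp add: sandwich_def outer_def sum_distrib_left sum_distrib_right mult_ac)
  also have "\<dots> = (\<Sum>t\<in>S. \<Sum>y\<in>UNIV. \<Sum>y'\<in>UNIV. c t * (T x y * u t y) * cnj (T x' y' * u t y'))"
    by (rule sum_swap3_rotate)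
  also have "\<dots> = (\<Sum>t\<in>S. c t * outer (op_apply T (u t)) (op_apply T (u t)) x x')"
    by (simp add: outer_def op_apply_def sum_distrib_left sum_distrib_right mult_ac cnj_sum)
      (rule sum.cong[OF refl], rule sum.swap)
  finally show "sandwich T (\<lambda>x y. \<Sum>t\<in>S. c t * outer (u t) (u t) x y) x x' =
     (\<Sum>t\<in>S. c t * outer (op_apply T (u t)) (op_apply T (u t)) x x')" .
qed

lemma sandwich_outer: "sandwich M (outer u u) = outer (op_apply M u) (op_apply M u)"
  using sandwich_outer_sum[of M "\<lambda>_. 1" "\<lambda>_. u" "{()}"] by simp

lemma sandwich_diff: "sandwich M (\<lambda>i j. A i j - Z i j) = (\<lambda>i j. sandwich M A i j - sandwich M Z i j)"
  by (simp add: sandwich_def right_diff_distrib left_diff_distrib sum_subtractf)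

lemma sandwich_zero: "sandwich M (\<lambda>i j. 0) = (\<lambda>i j. 0)"
  by (simp add: sandwich_def)

lemma sandwich_left_inverse: "op_mult Mi M = id_op \<Longrightarrow> sandwich Mi (sandwich M X) = (X :: ('x::finite, 'x) op)"
  by (simp add: sandwich_sandwich sandwich_id)

lemma sandwich_tensor_split:
  fixes \<rho> :: "('a::finite \<times> 'b::finite, 'a \<times> 'b) op" and PA :: "('c::finite, 'a) op" and PB :: "('d, 'b) op"
  shows "sandwich (tensor_op PA PB) \<rho> = sandwich (tensor_op id_op PB) (sandwich (tensor_op PA id_op) \<rho>)"
  by (simp add: sandwich_sandwich op_mult_tensor op_mult_id_left op_mult_id_right)

lemma conj_op_id: "conj_op id_op = id_op"
  by (intro ext) (simp add: conj_op_def id_op_def)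

lemma partial_transpose_sandwich_left:
  fixes \<rho> :: "('a::finite \<times> 'b::finite, 'a \<times> 'b) op"
  shows "partial_transpose (sandwich (tensor_op M id_op) \<rho>) = sandwich (tensor_op M id_op) (partial_transpose \<rho>)"
  using partial_transpose_sandwich[of M id_op \<rho>] by (simp add: conj_op_id)

lemma adjoint_tensor: "adjoint (tensor_op M N) = tensor_op (adjoint M) (adjoint N)"
  by (rule op_eqI) (simp add: adjoint_def)

lemma adjoint_adjoint [simp]: "adjoint (adjoint M) = M"
  by (simp add: adjoint_def)

lemma adjoint_id: "adjoint id_op = id_op"
  by (intro ext) (simp add: adjoint_def id_op_def)

lemma op_apply_lincomb:
  "op_apply A (\<lambda>p. c0 * x p + c1 * y p) = (\<lambda>p. c0 * op_apply A x p + c1 * op_apply A y p)"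
  by (simp add: op_apply_def distrib_left sum.distrib sum_distrib_left mult_ac)

lemma op_apply_id: "op_apply id_op v = (v :: 'x::finite \<Rightarrow> complex)"
  by (intro ext) (simp add: op_apply_def id_op_ket(1))

definition sep_sum ::
    "nat \<Rightarrow> (nat \<Rightarrow> real) \<Rightarrow> (nat \<Rightarrow> 'a \<Rightarrow> complex) \<Rightarrow> (nat \<Rightarrow> 'b \<Rightarrow> complex) \<Rightarrow> ('a \<times> 'b, 'a \<times> 'b) op"
  where "sep_sum n c a b =
    (\<lambda>x y. \<Sum>t<n. complex_of_real (c t) * outer (tensor_vec (a t) (b t)) (tensor_vec (a t) (b t)) x y)"

lemma separable_iff_sep_sum: "separable \<rho> \<longleftrightarrow> (\<exists>n c a b. (\<forall>t<n. 0 \<le> c t) \<and> \<rho> = sep_sum n c a b)"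
proof -
  have "(\<lambda>(i, k) (j, l). \<Sum>t<n. complex_of_real (c t) * a t i * cnj (a t j) * b t k * cnj (b t l)) =
      sep_sum n c a b" for n c a b
    by (rule op_eqI) (simp add: sep_sum_def outer_def mult_ac)
  then show ?thesis unfolding separable_def by metis
qed

lemma sep_sum_Suc:
  "sep_sum (Suc n) c a b = (\<lambda>x y. sep_sum n c a b x y +
     complex_of_real (c n) * outer (tensor_vec (a n) (b n)) (tensor_vec (a n) (b n)) x y)"
  by (simp add: sep_sum_def)

lemma separable_add_product:
  assumes "separable A" and "0 \<le> c0"
  shows "separable (\<lambda>x y. A x y + complex_of_real c0 * outer (tensor_vec a0 b0) (tensor_vec a0 b0) x y)"
proof -
  obtain n c a b where h: "\<forall>t<n. 0 \<le> c t" "A = sep_sum n c a b"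
    using assms(1) separable_iff_sep_sum by metis
  have "sep_sum (Suc n) (c(n := c0)) (a(n := a0)) (b(n := b0)) =
      (\<lambda>x y. A x y + complex_of_real c0 * outer (tensor_vec a0 b0) (tensor_vec a0 b0) x y)"
    unfolding sep_sum_Suc h(2) by (simp add: sep_sum_def)
  moreover have "\<forall>t<Suc n. 0 \<le> (c(n := c0)) t" using h(1) assms(2) by (simp add: less_Suc_eq)
  ultimately show ?thesis unfolding separable_iff_sep_sum by metis
qed

lemma separable_zero: "separable (\<lambda>x y. 0)"
  unfolding separable_iff_sep_sum by (rule exI[of _ 0]) (simp add: sep_sum_def)

lemma separable_outer_tensor: "separable (outer (tensor_vec a b) (tensor_vec a b))"
  using separable_add_product[OF separable_zero, of 1 a b] by simp

lemma separable_add: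
  assumes "separable A" and "separable B"
  shows "separable (\<lambda>x y. A x y + B x y)"
proof -
  obtain n c a b where h: "\<forall>t<n. 0 \<le> c t" "B = sep_sum n c a b"
    using assms(2) separable_iff_sep_sum by metis
  have "\<forall>t<n. 0 \<le> c t \<Longrightarrow> separable (\<lambda>x y. A x y + sep_sum n c a b x y)"
  proof (induction n)
    case 0
    then show ?case using assms(1) by (simp add: sep_sum_def)
  next
    case (Suc n)
    then have "separable (\<lambda>x y. (A x y + sep_sum n c a b x y) +
        complex_of_real (c n) * outer (tensor_vec (a n) (b n)) (tensor_vec (a n) (b n)) x y)"
      by (intro separable_add_product) auto
    then show ?case by (simp add: sep_sum_Suc add.assoc)
  qed
  then show ?thesis using h by simp
qed

lemma separable_sandwich_tensor:
  assumes "separable \<rho>"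
  shows "separable (sandwich (tensor_op M N) \<rho>)"
proof -
  obtain n c a b where h: "\<forall>t<n. 0 \<le> c t" "\<rho> = sep_sum n c a b"
    using assms separable_iff_sep_sum by metis
  have "sandwich (tensor_op M N) \<rho> = sep_sum n c (\<lambda>t. op_apply M (a t)) (\<lambda>t. op_apply N (b t))"
    unfolding h(2) sep_sum_def sandwich_outer_sum op_apply_tensor ..
  then show ?thesis using h(1) separable_iff_sep_sum by metis
qed

lemma separable_of_sandwich_tensor:
  fixes \<rho> :: "('a::finite \<times> 'b::finite, 'a \<times> 'b) op"
  assumes "separable (sandwich (tensor_op M N) \<rho>)" and "op_mult Mi M = id_op" and "op_mult Ni N = id_op"
  shows "separable \<rho>"
proof -
  have "sandwich (tensor_op Mi Ni) (sandwich (tensor_op M N) \<rho>) = \<rho>"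
    by (simp add: sandwich_sandwich op_mult_tensor assms tensor_op_id sandwich_id)
  then show ?thesis using separable_sandwich_tensor[OF assms(1), of Mi Ni] by simp
qed

lemma separable_partial_transpose:
  assumes "separable \<rho>"
  shows "separable (partial_transpose \<rho>)"
proof -
  obtain n c a b where h: "\<forall>t<n. 0 \<le> c t" "\<rho> = sep_sum n c a b"
    using assms separable_iff_sep_sum by metis
  have "partial_transpose \<rho> = sep_sum n c a (\<lambda>t. conj_vec (b t))"
    unfolding h(2) by (rule op_eqI) (simp add: sep_sum_def outer_def conj_vec_def mult_ac)
  then show ?thesis using h(1) separable_iff_sep_sum by metis
qed

lemma separable_partial_transpose_iff: "separable (partial_transpose \<rho>) \<longleftrightarrow> separable \<rho>"
  using separable_partial_transpose partial_transpose_involution by metis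

lemma separable_imp_psd:
  fixes \<rho> :: "('a::finite \<times> 'b::finite, 'a \<times> 'b) op"
  assumes "separable \<rho>"
  shows "psd \<rho>"
proof -
  obtain n c a b where h: "\<forall>t<n. 0 \<le> c t" "\<rho> = sep_sum n c a b"
    using assms separable_iff_sep_sum by metis
  have "\<forall>t<n. 0 \<le> c t \<Longrightarrow> psd (sep_sum n c a b)"
  proof (induction n)
    case 0
    then show ?case by (simp add: sep_sum_def psd_zero)
  next
    case (Suc n)
    then show ?case unfolding sep_sum_Suc by (intro psd_add psd_scale psd_outer) auto
  qed
  then show ?thesis using h by simp
qed

lemma separable_imp_ppt:
  "separable (\<rho> :: ('a::finite \<times> 'b::finite, 'a \<times> 'b) op) \<Longrightarrow> psd (partial_transpose \<rho>)"
  by (intro separable_imp_psd separable_partial_transpose)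

lemma op_apply_outer: "op_apply (outer c c) k = (\<lambda>p. c p * inner_c c k)"
  by (simp add: op_apply_def outer_def inner_c_def sum_distrib_left mult_ac)

lemma op_apply_add: "op_apply (\<lambda>x y. A x y + B x y) k = (\<lambda>p. op_apply A k p + op_apply B k p)"
  by (simp add: op_apply_def distrib_right sum.distrib)

lemma op_apply_diff_scale:
  "op_apply (\<lambda>x y. A x y - c * B x y) k = (\<lambda>p. op_apply A k p - c * op_apply B k p)"
  unfolding op_apply_def
  by (simp add: right_diff_distrib left_diff_distrib sum_subtractf sum_distrib_left mult_ac)

lemma inner_c_lincomb: "inner_c c (\<lambda>x. s * a x + b x) = s * inner_c c a + inner_c c b"
  by (simp add: inner_c_def distrib_left sum.distrib sum_distrib_left mult_ac)

lemma cauchy_schwarz3: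
  fixes w0 w1 w2 a0 a1 a2 :: complex
  shows "(cmod (cnj w0 * a0 + cnj w1 * a1 + cnj w2 * a2))\<^sup>2 \<le>
    ((cmod w0)\<^sup>2 + (cmod w1)\<^sup>2 + (cmod w2)\<^sup>2) * ((cmod a0)\<^sup>2 + (cmod a1)\<^sup>2 + (cmod a2)\<^sup>2)"
proof -
  have real: "(x0 * y0 + x1 * y1 + x2 * y2)\<^sup>2 \<le> (x0\<^sup>2 + x1\<^sup>2 + x2\<^sup>2) * (y0\<^sup>2 + y1\<^sup>2 + y2\<^sup>2)"
    for x0 x1 x2 y0 y1 y2 :: real
  proof -
    have "(x0\<^sup>2 + x1\<^sup>2 + x2\<^sup>2) * (y0\<^sup>2 + y1\<^sup>2 + y2\<^sup>2) - (x0 * y0 + x1 * y1 + x2 * y2)\<^sup>2 =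
       (x0 * y1 - x1 * y0)\<^sup>2 + (x0 * y2 - x2 * y0)\<^sup>2 + (x1 * y2 - x2 * y1)\<^sup>2"
      by (simp add: power2_eq_square algebra_simps)
    then show ?thesis by (smt (verit) zero_le_power2)
  qed
  have "cmod (cnj w0 * a0 + cnj w1 * a1 + cnj w2 * a2) \<le> cmod w0 * cmod a0 + cmod w1 * cmod a1 + cmod w2 * cmod a2"
    using norm_triangle_ineq[of "cnj w0 * a0 + cnj w1 * a1" "cnj w2 * a2"]
      norm_triangle_ineq[of "cnj w0 * a0" "cnj w1 * a1"]
    by (simp add: norm_mult)
  then have "(cmod (cnj w0 * a0 + cnj w1 * a1 + cnj w2 * a2))\<^sup>2 \<le>
      (cmod w0 * cmod a0 + cmod w1 * cmod a1 + cmod w2 * cmod a2)\<^sup>2"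
    by (simp add: power_mono)
  also have "\<dots> \<le> ((cmod w0)\<^sup>2 + (cmod w1)\<^sup>2 + (cmod w2)\<^sup>2) * ((cmod a0)\<^sup>2 + (cmod a1)\<^sup>2 + (cmod a2)\<^sup>2)"
    by (rule real)
  finally show ?thesis .
qed

definition outer3 :: "('x \<Rightarrow> complex) \<Rightarrow> ('x \<Rightarrow> complex) \<Rightarrow> ('x \<Rightarrow> complex) \<Rightarrow> ('x, 'x) op" where
  "outer3 c0 c1 c2 = (\<lambda>p q. outer c0 c0 p q + outer c1 c1 p q + outer c2 c2 p q)"

definition comb3 ::
    "complex \<Rightarrow> complex \<Rightarrow> complex \<Rightarrow> ('x \<Rightarrow> complex) \<Rightarrow> ('x \<Rightarrow> complex) \<Rightarrow> ('x \<Rightarrow> complex) \<Rightarrow> ('x \<Rightarrow> complex)"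
  where "comb3 w0 w1 w2 c0 c1 c2 = (\<lambda>p. w0 * c0 p + w1 * c1 p + w2 * c2 p)"

lemma inner_c_comb3:
  "inner_c (comb3 w0 w1 w2 c0 c1 c2) u = cnj w0 * inner_c c0 u + cnj w1 * inner_c c1 u + cnj w2 * inner_c c2 u"
  by (simp add: comb3_def inner_c_def distrib_left distrib_right sum.distrib sum_distrib_left mult_ac)

lemma op_apply_outer3:
  "op_apply (outer3 c0 c1 c2) k = (\<lambda>p. c0 p * inner_c c0 k + c1 p * inner_c c1 k + c2 p * inner_c c2 k)"
  unfolding outer3_def op_apply_add op_apply_outer ..

lemma psd_outer3_diff:
  fixes c0 c1 c2 :: "'x::finite \<Rightarrow> complex"
  assumes t0: "0 \<le> t" and tw: "t * ((cmod w0)\<^sup>2 + (cmod w1)\<^sup>2 + (cmod w2)\<^sup>2) \<le> 1"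
  shows "psd (\<lambda>p q. outer3 c0 c1 c2 p q -
    of_real t * outer (comb3 w0 w1 w2 c0 c1 c2) (comb3 w0 w1 w2 c0 c1 c2) p q)"
  unfolding psd_def
proof
  fix u :: "'x \<Rightarrow> complex"
  define S where "S = (cmod (inner_c c0 u))\<^sup>2 + (cmod (inner_c c1 u))\<^sup>2 + (cmod (inner_c c2 u))\<^sup>2"
  define W where "W = (cmod w0)\<^sup>2 + (cmod w1)\<^sup>2 + (cmod w2)\<^sup>2"
  define I where "I = inner_c (comb3 w0 w1 w2 c0 c1 c2) u"
  have "(cmod I)\<^sup>2 \<le> W * S" unfolding I_def W_def S_def inner_c_comb3 by (rule cauchy_schwarz3)
  then have "t * (cmod I)\<^sup>2 \<le> t * W * S" using t0 by (simp add: mult_left_mono mult.assoc)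
  also have "\<dots> \<le> S" using tw t0 S_def W_def
    by (metis mult_left_le_one_le mult_nonneg_nonneg zero_le_power2 add_nonneg_nonneg mult.commute)
  finally have "0 \<le> S - t * (cmod I)\<^sup>2" by simp
  moreover have "expval (\<lambda>p q. outer3 c0 c1 c2 p q -
      of_real t * outer (comb3 w0 w1 w2 c0 c1 c2) (comb3 w0 w1 w2 c0 c1 c2) p q) u = of_real (S - t * (cmod I)\<^sup>2)"
    unfolding expval_diff expval_scale outer3_def expval_add expval_outer S_def I_def
    by (simp add: cnj_mult_self)
  ultimately show "0 \<le> expval (\<lambda>p q. outer3 c0 c1 c2 p q -
      of_real t * outer (comb3 w0 w1 w2 c0 c1 c2) (comb3 w0 w1 w2 c0 c1 c2) p q) u"
    by (simp add: less_eq_complex_def)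
qed

lemma expval_partial_transpose_product:
  fixes \<sigma> :: "('a::finite \<times> 'b::finite, 'a \<times> 'b) op"
  shows "expval (partial_transpose \<sigma>) (tensor_vec a b) = expval \<sigma> (tensor_vec a (conj_vec b))"
proof -
  have L: "expval (partial_transpose \<sigma>) (tensor_vec a b) =
    (\<Sum>i\<in>UNIV. \<Sum>j\<in>UNIV. \<Sum>k\<in>UNIV. \<Sum>l\<in>UNIV. cnj (a i) * cnj (b j) * \<sigma> (i, l) (k, j) * a k * b l)"
    by (simp add: expval_def sum_UNIV_prod sum_distrib_left sum_distrib_right mult_ac)
  have R: "expval \<sigma> (tensor_vec a (conj_vec b)) =
    (\<Sum>i\<in>UNIV. \<Sum>j\<in>UNIV. \<Sum>k\<in>UNIV. \<Sum>l\<in>UNIV. cnj (a i) * b j * \<sigma> (i, j) (k, l) * a k * cnj (b l))"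
    by (simp add: expval_def sum_UNIV_prod sum_distrib_left sum_distrib_right conj_vec_def mult_ac)
  have X: "(\<Sum>j\<in>UNIV. \<Sum>k\<in>UNIV. \<Sum>l\<in>UNIV. cnj (a i) * b j * \<sigma> (i, j) (k, l) * a k * cnj (b l)) =
     (\<Sum>l\<in>UNIV. \<Sum>k\<in>UNIV. \<Sum>j\<in>UNIV. cnj (a i) * b j * \<sigma> (i, j) (k, l) * a k * cnj (b l))" for i
    by (rule sum_swap3)
  show ?thesis unfolding L R X by (simp add: mult_ac)
qed

lemma psd_partial_transpose_product_nonneg:
  fixes \<sigma> :: "('a::finite \<times> 'b::finite, 'a \<times> 'b) op"
  shows "psd \<sigma> \<Longrightarrow> 0 \<le> expval (partial_transpose \<sigma>) (tensor_vec a b)"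
  by (simp add: expval_partial_transpose_product psd_def)

lemma expval_hermitian_real:
  fixes A :: "('x::finite, 'x) op"
  assumes "\<And>x y. A x y = cnj (A y x)"
  shows "Im (expval A v) = 0"
proof -
  have "cnj (expval A v) = (\<Sum>x\<in>UNIV. \<Sum>y\<in>UNIV. v x * A y x * cnj (v y))"
    unfolding expval_def cnj_sum by (simp add: assms[symmetric])
  also have "\<dots> = expval A v"
    unfolding expval_def by (subst sum.swap) (simp add: mult_ac)
  finally show ?thesis by (simp add: complex_eq_iff)
qed

lemma partial_transpose_hermitian:
  fixes \<sigma> :: "('a::finite \<times> 'b::finite, 'a \<times> 'b) op"
  assumes "psd \<sigma>"
  shows "partial_transpose \<sigma> x y = cnj (partial_transpose \<sigma> y x)"
proof -
  obtain i j where x: "x = (i, j)" by (cases x)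
  obtain k l where y: "y = (k, l)" by (cases y)
  show ?thesis using psd_hermitian[OF assms, of "(i,l)" "(k,j)"] by (simp add: x y)
qed


section \<open>Two-by-two matrices\<close>

lemma exhaust_2: "(x::2) = 0 \<or> x = 1"
proof (cases x)
  case (of_int z)
  then have "z = 0 \<or> z = 1" by auto
  then show ?thesis using of_int by auto
qed

lemma zero_neq_one_2 [simp]: "(0::2) \<noteq> 1" "(1::2) \<noteq> 0"
  by auto

lemma UNIV_2: "(UNIV :: 2 set) = {0, 1}"
  using exhaust_2 by auto

lemma sum_UNIV_2: "(\<Sum>x\<in>(UNIV::2 set). f x) = f 0 + f 1"
  by (simp add: UNIV_2)

lemma all_2: "(\<forall>x::2. P x) \<longleftrightarrow> P 0 \<and> P 1"
  using exhaust_2 by metis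

lemma op2_eqI:
  fixes X Y :: "(2, 2) op"
  assumes "X 0 0 = Y 0 0" "X 0 1 = Y 0 1" "X 1 0 = Y 1 0" "X 1 1 = Y 1 1"
  shows "X = Y"
proof (intro ext)
  fix i j :: 2
  show "X i j = Y i j" using assms exhaust_2[of i] exhaust_2[of j] by auto
qed

lemma vec2_eqI:
  fixes x y :: "2 \<Rightarrow> complex"
  assumes "x 0 = y 0" "x 1 = y 1"
  shows "x = y"
proof (intro ext)
  fix i :: 2
  show "x i = y i" using assms exhaust_2[of i] by auto
qed

lemma vec2_nonzero_iff: "(x :: 2 \<Rightarrow> complex) \<noteq> (\<lambda>_. 0) \<longleftrightarrow> x 0 \<noteq> 0 \<or> x 1 \<noteq> 0"
  using vec2_eqI[of x "\<lambda>_. 0"] by auto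

lemma expval_2:
  "expval (X :: (2,2) op) v =
     cnj (v 0) * X 0 0 * v 0 + cnj (v 0) * X 0 1 * v 1 + cnj (v 1) * X 1 0 * v 0 + cnj (v 1) * X 1 1 * v 1"
  by (simp add: expval_def sum_UNIV_2 algebra_simps)

lemma op_apply_2: "op_apply (X :: (2,2) op) v = (\<lambda>i. X i 0 * v 0 + X i 1 * v 1)"
  by (simp add: op_apply_def sum_UNIV_2)

lemma inner_c_2: "inner_c (u :: 2 \<Rightarrow> complex) v = cnj (u 0) * v 0 + cnj (u 1) * v 1"
  by (simp add: inner_c_def sum_UNIV_2)

lemma op_mult_2: "op_mult (X :: (2,2) op) Y = (\<lambda>i j. X i 0 * Y 0 j + X i 1 * Y 1 j)"
  by (simp add: op_mult_def sum_UNIV_2)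

lemma id_op_2:
  "(id_op :: (2,2) op) 0 0 = 1" "(id_op :: (2,2) op) 0 1 = 0"
  "(id_op :: (2,2) op) 1 0 = 0" "(id_op :: (2,2) op) 1 1 = 1"
  by (auto simp: id_op_def)

lemma vec2_norm_sq_nonzero:
  fixes a :: "2 \<Rightarrow> complex"
  assumes "a \<noteq> (\<lambda>_. 0)"
  shows "cnj (a 0) * a 0 + cnj (a 1) * a 1 \<noteq> 0"
proof -
  have "cnj (a 0) * a 0 + cnj (a 1) * a 1 = of_real ((cmod (a 0))\<^sup>2 + (cmod (a 1))\<^sup>2)"
    by (simp add: cnj_mult_self)
  moreover have "(cmod (a 0))\<^sup>2 + (cmod (a 1))\<^sup>2 \<noteq> 0"
    using assms vec2_nonzero_iff[of a] by (auto simp: add_nonneg_eq_0_iff)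
  ultimately show ?thesis by (metis of_real_eq_0_iff)
qed

definition det2 :: "(2,2) op \<Rightarrow> complex" where
  "det2 X = X 0 0 * X 1 1 - X 0 1 * X 1 0"

definition inv2 :: "(2,2) op \<Rightarrow> (2,2) op" where
  "inv2 X = (\<lambda>i j. (if i = 0 then (if j = 0 then X 1 1 else - X 0 1)
                    else (if j = 0 then - X 1 0 else X 0 0)) / det2 X)"

lemma op_mult_inv2:
  assumes "det2 X \<noteq> 0"
  shows "op_mult (inv2 X) X = id_op"
proof -
  define d where "d = det2 X"
  have dd: "X 0 0 * X 1 1 - X 0 1 * X 1 0 = d" and d0: "d \<noteq> 0"
    using assms by (simp_all add: det2_def d_def)
  have e1: "X 1 1 / d * X 0 0 + - X 0 1 / d * X 1 0 = 1"
    and e2: "- X 1 0 / d * X 0 1 + X 0 0 / d * X 1 1 = 1"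
    using d0 dd by (simp_all add: field_simps mult.commute)
  have e3: "X 1 1 / d * X 0 1 + - X 0 1 / d * X 1 1 = 0"
    and e4: "- X 1 0 / d * X 0 0 + X 0 0 / d * X 1 0 = 0"
    by (simp_all add: field_simps)
  have f: "X 1 1 * X 0 0 / d - X 0 1 * X 1 0 / d = 1" "X 0 0 * X 1 1 / d - X 1 0 * X 0 1 / d = 1"
    using d0 dd by (simp_all add: diff_divide_distrib[symmetric] mult.commute)
  show ?thesis
    by (rule op2_eqI) (simp_all add: op_mult_2 inv2_def id_op_2 d_def[symmetric] e1 e2 e3 e4 f)
qed

lemma det2_sandwich: "det2 (sandwich M X) = det2 M * det2 X * cnj (det2 M)"
  by (simp add: det2_def sandwich_def sum_UNIV_2 algebra_simps)

definition E00 :: "(2,2) op" where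
  "E00 = (\<lambda>i j. if i = 0 \<and> j = 0 then 1 else 0)"

lemma E00_apply [simp]: "E00 0 0 = 1" "E00 0 1 = 0" "E00 1 0 = 0" "E00 1 1 = 0"
  by (simp_all add: E00_def)

lemma psd_E00: "psd E00"
proof -
  have "E00 = outer (ket 0) (ket 0)" by (rule op2_eqI) (simp_all add: outer_def ket_def)
  then show ?thesis using psd_outer[of "ket (0::2)"] by metis
qed

definition perp2 :: "(2 \<Rightarrow> complex) \<Rightarrow> (2 \<Rightarrow> complex)" where
  "perp2 g = (\<lambda>i. if i = 0 then cnj (g 1) else - cnj (g 0))"

lemma perp2_nonzero: "g \<noteq> (\<lambda>_. 0) \<Longrightarrow> perp2 g \<noteq> (\<lambda>_. 0)"
  using vec2_nonzero_iff[of g] vec2_nonzero_iff[of "perp2 g"] by (auto simp: perp2_def)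

lemma inner_c_perp2_self: "inner_c u (perp2 u) = 0"
  by (simp add: inner_c_2 perp2_def)

lemma perp2_orthogonal_imp_parallel:
  fixes e u :: "2 \<Rightarrow> complex"
  assumes e: "e \<noteq> (\<lambda>_. 0)" and h: "inner_c (perp2 e) u = 0"
  shows "u = (\<lambda>l. (inner_c e u / inner_c e e) * e l)"
proof -
  have ee: "inner_c e e \<noteq> 0" using vec2_norm_sq_nonzero[OF e] by (simp add: inner_c_2)
  have h': "e 1 * u 0 = e 0 * u 1" using h by (simp add: inner_c_2 perp2_def)
  have "u 0 * inner_c e e = inner_c e u * e 0"
    by (simp add: inner_c_2 algebra_simps h')
  moreover have "u 1 * inner_c e e = inner_c e u * e 1"
    by (simp add: inner_c_2 algebra_simps h'[symmetric])
  ultimately show ?thesis using ee by (intro vec2_eqI) (simp_all add: field_simps)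
qed

lemma of_real_cmod_mult_self: "complex_of_real (cmod b) * complex_of_real (cmod b) = b * cnj b"
  by (metis complex_norm_square of_real_mult power2_eq_square)

lemma cmod_mult_self: "cmod z * cmod z = Re z * Re z + Im z * Im z"
  using cmod_power2[of z] by (simp add: power2_eq_square)

lemma of_real_sqrt_mult_self:
  assumes "0 \<le> a"
  shows "complex_of_real (sqrt a) * complex_of_real (sqrt a) = complex_of_real a"
proof -
  have "sqrt a * sqrt a = a" using assms by simp
  then show ?thesis by (metis of_real_mult)
qed

lemma psd2_entries:
  fixes X :: "(2,2) op"
  assumes p: "psd X"
  shows "X 0 1 = cnj (X 1 0)" "Im (X 0 0) = 0" "Im (X 1 1) = 0" "0 \<le> Re (X 0 0)" "0 \<le> Re (X 1 1)"
    and "(cmod (X 0 1))\<^sup>2 \<le> Re (X 0 0) * Re (X 1 1)"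
proof -
  show h: "X 0 1 = cnj (X 1 0)" using psd_hermitian[OF p, of 0 1] by simp
  show d0: "Im (X 0 0) = 0" "0 \<le> Re (X 0 0)" and d1: "Im (X 1 1) = 0" "0 \<le> Re (X 1 1)"
    using psd_diag_nonneg[OF p, of 0] psd_diag_nonneg[OF p, of 1] by (auto simp: less_eq_complex_def)
  show "(cmod (X 0 1))\<^sup>2 \<le> Re (X 0 0) * Re (X 1 1)"
  proof (cases "Re (X 0 0) = 0")
    case True
    then have "X 0 0 = 0" using d0 by (simp add: complex_eq_iff)
    then have "X 0 1 = 0" using psd_zero_diag_row[OF p] by simp
    then show ?thesis using True by simp
  next
    case False
    then have apos: "0 < Re (X 0 0)" using d0 by simp
    define a where "a = Re (X 0 0)"
    define b where "b = X 0 1"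
    define d where "d = Re (X 1 1)"
    have X10: "X 1 0 = cnj b" using h b_def by simp
    have X00: "X 0 0 = of_real a" using d0 a_def by (simp add: complex_eq_iff)
    have X11: "X 1 1 = of_real d" using d1 d_def by (simp add: complex_eq_iff)
    have anz: "a \<noteq> 0" using apos a_def by simp
    have "0 \<le> expval X (\<lambda>i. if i = 0 then - b / of_real a else 1)" using p psd_def by blast
    also have "expval X (\<lambda>i. if i = 0 then - b / of_real a else 1) = of_real (d - (cmod b)\<^sup>2 / a)"
      unfolding expval_2 X10 X00 X11 b_def[symmetric] using anz
      by (simp add: field_simps cnj_mult_self[symmetric] power2_eq_square mult.commute of_real_cmod_mult_self)
    finally have "0 \<le> d - (cmod b)\<^sup>2 / a" by (simp add: less_eq_complex_def)
    then show ?thesis using apos by (simp add: a_def b_def d_def field_simps)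
  qed
qed

lemma psd2I:
  fixes X :: "(2,2) op" and a d :: real
  assumes X: "X 0 0 = of_real a" "X 1 1 = of_real d" "X 1 0 = b" "X 0 1 = cnj b"
    and ab: "0 \<le> a" "0 \<le> d" "(cmod b)\<^sup>2 \<le> a * d"
  shows "psd X"
  unfolding psd_def
proof
  fix v :: "2 \<Rightarrow> complex"
  define q where "q = a * (cmod (v 0))\<^sup>2 + 2 * Re (cnj (v 0) * cnj b * v 1) + d * (cmod (v 1))\<^sup>2"
  have ev: "expval X v = of_real q"
    unfolding expval_2 X q_def
    by (simp add: complex_eq_iff cmod_power2 power2_eq_square algebra_simps cmod_mult_self)
  have "0 \<le> q"
  proof (cases "a = 0")
    case True
    then have "b = 0" using ab by simp
    then show ?thesis using True ab by (simp add: q_def)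
  next
    case False
    have "a * q = (cmod (of_real a * v 0 + cnj b * v 1))\<^sup>2 + (a * d - (cmod b)\<^sup>2) * (cmod (v 1))\<^sup>2"
      by (simp add: q_def cmod_power2 power2_eq_square algebra_simps cmod_mult_self)
    also have "0 \<le> \<dots>" using ab by (intro add_nonneg_nonneg mult_nonneg_nonneg) auto
    finally show ?thesis using False ab by (simp add: zero_le_mult_iff)
  qed
  then show "0 \<le> expval X v" unfolding ev by (simp add: less_eq_complex_def)
qed

lemma psd2E:
  fixes X :: "(2,2) op"
  assumes "psd X"
  obtains a d :: real and b where "X 0 0 = of_real a" "X 1 1 = of_real d" "X 1 0 = b" "X 0 1 = cnj b"
    and "0 \<le> a" "0 \<le> d" "(cmod b)\<^sup>2 \<le> a * d"
proof
  show "X 0 0 = of_real (Re (X 0 0))" "X 1 1 = of_real (Re (X 1 1))"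
    using psd2_entries[OF assms] by (simp_all add: complex_eq_iff)
  show "X 1 0 = X 1 0" "X 0 1 = cnj (X 1 0)" "0 \<le> Re (X 0 0)" "0 \<le> Re (X 1 1)"
    "(cmod (X 1 0))\<^sup>2 \<le> Re (X 0 0) * Re (X 1 1)"
    using psd2_entries[OF assms] by auto
qed

lemma det2_hermitian:
  fixes X :: "(2,2) op" and a d :: real
  assumes "X 0 0 = of_real a" "X 1 1 = of_real d" "X 1 0 = b" "X 0 1 = cnj b"
  shows "det2 X = of_real (a * d - (cmod b)\<^sup>2)"
  by (simp add: det2_def assms cnj_mult_self)

lemma psd2_sum_two_outer:
  fixes X :: "(2,2) op"
  assumes "psd X"
  obtains u1 u2 where "X = (\<lambda>i j. outer u1 u1 i j + outer u2 u2 i j)" and "det2 X = 0 \<Longrightarrow> u2 = (\<lambda>_. 0)"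
proof -
  obtain a d b where X: "X 0 0 = of_real a" "X 1 1 = of_real d" "X 1 0 = b" "X 0 1 = cnj b"
    and ab: "0 \<le> a" "0 \<le> d" "(cmod b)\<^sup>2 \<le> a * d"
    using psd2E[OF assms] by metis
  show ?thesis
  proof (cases "a = 0")
    case True
    then have "b = 0" using ab by simp
    define u1 where "u1 = (\<lambda>i::2. if i = 0 then 0 else complex_of_real (sqrt d))"
    have "X = (\<lambda>i j. outer u1 u1 i j + outer (\<lambda>_. 0) (\<lambda>_. 0) i j)"
      using \<open>b = 0\<close> True ab
      by (intro op2_eqI) (simp_all add: outer_def u1_def X of_real_sqrt_mult_self)
    then show ?thesis using that by blast
  next
    case False
    then have apos: "0 < a" using ab by simp
    \<comment> \<open>Cholesky factorisation; \<open>e\<close> is the Schur complement of \<open>a\<close>\<close>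
    define e where "e = d - (cmod b)\<^sup>2 / a"
    have e0: "0 \<le> e" using ab apos by (simp add: e_def field_simps)
    define u1 where "u1 = (\<lambda>i::2. if i = 0 then complex_of_real (sqrt a) else b / complex_of_real (sqrt a))"
    define u2 where "u2 = (\<lambda>i::2. if i = 0 then 0 else complex_of_real (sqrt e))"
    have sa: "complex_of_real (sqrt a) \<noteq> 0" using apos by simp
    have "b / complex_of_real (sqrt a) * cnj (b / complex_of_real (sqrt a)) = of_real ((cmod b)\<^sup>2 / a)"
      using apos sa
      by (simp add: of_real_cmod_mult_self[symmetric] power2_eq_square of_real_sqrt_mult_self field_simps)
    then have "X = (\<lambda>i j. outer u1 u1 i j + outer u2 u2 i j)"
      using apos sa e0
      by (intro op2_eqI) (simp_all add: outer_def u1_def u2_def X of_real_sqrt_mult_self e_def)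
    moreover have "u2 = (\<lambda>_. 0)" if "det2 X = 0"
    proof -
      have "a * d - (cmod b)\<^sup>2 = 0" using that det2_hermitian[OF X] by (metis of_real_eq_0_iff)
      then have "e = 0" using apos by (simp add: e_def field_simps)
      then show ?thesis by (simp add: u2_def fun_eq_iff)
    qed
    ultimately show ?thesis using that by blast
  qed
qed

lemma psd2_singular_outer:
  fixes X :: "(2,2) op"
  assumes "psd X" "det2 X = 0"
  obtains u where "X = outer u u"
proof -
  obtain u1 u2 where "X = (\<lambda>i j. outer u1 u1 i j + outer u2 u2 i j)" "u2 = (\<lambda>_. 0)"
    using psd2_sum_two_outer[OF assms(1)] assms(2) by metis
  then have "X = outer u1 u1" by (simp add: outer_def)
  then show ?thesis using that by blast
qed

lemma psd2_singular_null_vector: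
  fixes X :: "(2,2) op"
  assumes "psd X" "det2 X = 0"
  obtains z where "z \<noteq> (\<lambda>_. 0)" "expval X z = 0"
proof -
  obtain u where X: "X = outer u u" using psd2_singular_outer[OF assms] by blast
  show ?thesis
  proof (cases "u = (\<lambda>_. 0)")
    case True
    then show ?thesis
      using that[of "ket 0"] by (simp add: X expval_outer inner_c_def fun_eq_iff ket_def)
  next
    case False
    then show ?thesis
      using that[of "perp2 u"] perp2_nonzero by (simp add: X expval_outer inner_c_perp2_self)
  qed
qed

lemma psd2_subtract_E00:
  fixes X :: "(2,2) op"
  assumes "psd X"
  obtains t where "0 \<le> t" "\<And>s. 0 \<le> s \<Longrightarrow> s \<le> t \<Longrightarrow> psd (\<lambda>i j. X i j - of_real s * E00 i j)"
    and "det2 (\<lambda>i j. X i j - of_real t * E00 i j) = 0"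
proof -
  obtain a d b where X: "X 0 0 = of_real a" "X 1 1 = of_real d" "X 1 0 = b" "X 0 1 = cnj b"
    and ab: "0 \<le> a" "0 \<le> d" "(cmod b)\<^sup>2 \<le> a * d"
    using psd2E[OF assms] by metis
  have psd: "psd (\<lambda>i j. X i j - of_real s * E00 i j)" if "0 \<le> a - s" "(cmod b)\<^sup>2 \<le> (a - s) * d" for s
    by (rule psd2I[of _ "a - s" d b]) (use that ab in \<open>simp_all add: X\<close>)
  have det: "det2 (\<lambda>i j. X i j - of_real s * E00 i j) = of_real ((a - s) * d - (cmod b)\<^sup>2)" for s
    by (rule det2_hermitian) (simp_all add: X)
  show ?thesis
  proof (cases "d = 0")
    case True
    then show ?thesis using ab by (intro that[of a]) (auto intro!: psd simp: det)
  next
    case False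
    then have dpos: "0 < d" using ab by simp
    define t where "t = a - (cmod b)\<^sup>2 / d"
    have t0: "0 \<le> t" using ab dpos by (simp add: t_def field_simps)
    have t: "(a - t) * d = (cmod b)\<^sup>2" using dpos by (simp add: t_def field_simps)
    have "psd (\<lambda>i j. X i j - of_real s * E00 i j)" if "s \<le> t" for s
    proof (rule psd)
      show "0 \<le> a - s" using that t0 dpos by (simp add: t_def) (smt (verit) divide_nonneg_pos zero_le_power2)
      show "(cmod b)\<^sup>2 \<le> (a - s) * d" using that dpos t by (metis diff_left_mono mult_right_mono less_imp_le)
    qed
    then show ?thesis using t0 t by (intro that[of t]) (simp_all add: det)
  qed
qed

lemma psd2_congruent_id:
  fixes A :: "(2,2) op"
  assumes p: "psd A" and d: "det2 A \<noteq> 0"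
  obtains N where "det2 N \<noteq> 0" "sandwich N A = id_op"
proof -
  obtain a dd b where A: "A 0 0 = of_real a" "A 1 1 = of_real dd" "A 1 0 = b" "A 0 1 = cnj b"
    and ab: "0 \<le> a" "0 \<le> dd" "(cmod b)\<^sup>2 \<le> a * dd"
    using psd2E[OF p] by metis
  define D where "D = a * dd - (cmod b)\<^sup>2"
  have "det2 A = of_real D" unfolding D_def by (rule det2_hermitian[OF A])
  then have "D \<noteq> 0" using d by auto
  moreover have "0 \<le> D" using ab by (simp add: D_def)
  ultimately have Dpos: "0 < D" by simp
  have apos: "0 < a" using Dpos ab by (cases "a = 0") (auto simp: D_def)
  define sA where "sA = complex_of_real (sqrt a)"
  define sD where "sD = complex_of_real (sqrt D)"
  have sA: "sA * sA = of_real a" "sA \<noteq> 0" "cnj sA = sA"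
    using apos of_real_sqrt_mult_self[of a] by (auto simp: sA_def)
  have sD: "sD * sD = of_real D" "sD \<noteq> 0" "cnj sD = sD"
    using Dpos of_real_sqrt_mult_self[of D] by (auto simp: sD_def)
  have bb: "b * (cnj b * x) = (of_real a * of_real dd - of_real D) * x" for x
    by (simp add: D_def of_real_cmod_mult_self[symmetric] power2_eq_square mult.assoc[symmetric])
  have sA': "sA * (sA * x) = of_real a * x" and sD': "sD * (sD * x) = of_real D * x" for x
    by (simp_all add: sA(1) sD(1) mult.assoc[symmetric])
  \<comment> \<open>inverse Cholesky factor of \<open>A\<close>\<close>
  define N :: "(2,2) op" where
    "N = (\<lambda>i j. if i = 0 then (if j = 0 then 1 / sA else 0) else (if j = 0 then - b / (sA * sD) else sA / sD))"
  have "sandwich N A = id_op"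
    using sA sD apos Dpos
    by (intro op2_eqI) (simp_all add: sandwich_def sum_UNIV_2 N_def A id_op_2 field_simps sA' sD' bb)
  moreover have "det2 N \<noteq> 0" using sA sD by (simp add: det2_def N_def)
  ultimately show ?thesis using that by blast
qed

lemma complex_quadratic_root:
  fixes a b c :: complex
  assumes "a \<noteq> 0"
  obtains s where "a * s\<^sup>2 + b * s + c = 0"
proof
  define r where "r = csqrt (b\<^sup>2 - 4 * a * c)"
  have "a * ((- b + r) / (2 * a))\<^sup>2 + b * ((- b + r) / (2 * a)) + c =
      ((- b + r)\<^sup>2 + 2 * b * (- b + r) + 4 * a * c) / (4 * a)"
    using assms by (simp add: field_simps power2_eq_square)
  also have "(- b + r)\<^sup>2 + 2 * b * (- b + r) + 4 * a * c = r\<^sup>2 - (b\<^sup>2 - 4 * a * c)"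
    by (simp add: power2_eq_square algebra_simps)
  finally show "a * ((- b + r) / (2 * a))\<^sup>2 + b * ((- b + r) / (2 * a)) + c = 0"
    by (simp add: r_def)
qed

lemma unit_phase_real_comb:
  fixes a b :: complex
  obtains \<omega> where "\<omega> * cnj \<omega> = 1" "Im (a * \<omega> + b * cnj \<omega>) = 0"
proof (cases "a = cnj b")
  case True
  then show ?thesis by (intro that[of 1]) simp_all
next
  case False
  define dd where "dd = a - cnj b"
  have dd: "dd \<noteq> 0" using False by (simp add: dd_def)
  define \<omega> where "\<omega> = cnj dd / of_real (cmod dd)"
  have "\<omega> * cnj \<omega> = (dd * cnj dd) / (complex_of_real (cmod dd) * complex_of_real (cmod dd))"
    by (simp add: \<omega>_def mult.commute)
  also have "\<dots> = 1" using dd by (simp only: of_real_cmod_mult_self) simp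
  finally have "\<omega> * cnj \<omega> = 1" .
  moreover have "a * \<omega> + b * cnj \<omega> = (dd * cnj dd) / of_real (cmod dd) + cnj (b * cnj \<omega>) + b * cnj \<omega>"
    using dd by (simp add: \<omega>_def dd_def field_simps)
  then have "Im (a * \<omega> + b * cnj \<omega>) = 0"
    by (simp add: of_real_cmod_mult_self[symmetric])
  ultimately show ?thesis by (rule that)
qed

lemma traceless2_null_vector:
  fixes H :: "(2,2) op"
  assumes "H 0 0 + H 1 1 = 0"
  obtains y where "y \<noteq> (\<lambda>_. 0)" "expval H y = 0"
proof (cases "H 0 0 = 0")
  case True
  then have "expval H (ket 0) = 0" by (simp add: expval_ket)
  moreover have "ket (0::2) \<noteq> (\<lambda>_. 0)" by (auto simp: ket_def fun_eq_iff)
  ultimately show ?thesis using that by blast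
next
  case False
  define a where "a = H 0 1 / H 0 0"
  define b where "b = H 1 0 / H 0 0"
  obtain \<omega> where \<omega>: "\<omega> * cnj \<omega> = 1" "Im (a * \<omega> + b * cnj \<omega>) = 0"
    using unit_phase_real_comb by blast
  define c where "c = Re (a * \<omega> + b * cnj \<omega>)"
  have cc: "a * \<omega> + b * cnj \<omega> = of_real c" using \<omega>(2) by (simp add: c_def complex_eq_iff)
  \<comment> \<open>\<open>y = (1, r \<omega>)\<close> gives \<open>expval H y = H 0 0 * (1 - r\<^sup>2 + r c)\<close>; take the positive root\<close>
  define r where "r = (c + sqrt (c\<^sup>2 + 4)) / 2"
  have rr: "1 - r\<^sup>2 + r * c = 0"
  proof -
    have "sqrt (c\<^sup>2 + 4) * sqrt (c\<^sup>2 + 4) = c\<^sup>2 + 4" by simp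
    then show ?thesis unfolding r_def by (simp add: power2_eq_square field_simps)
  qed
  define y where "y = (\<lambda>i::2. if i = 0 then 1 else of_real r * \<omega>)"
  have H11: "H 1 1 = - H 0 0" using assms by (simp add: add_eq_0_iff)
  have "expval H y = H 0 0 * (1 - of_real r * of_real r * (\<omega> * cnj \<omega>) + of_real r * (a * \<omega> + b * cnj \<omega>))"
    using False by (simp add: expval_2 y_def H11 a_def b_def field_simps)
  also have "\<dots> = H 0 0 * of_real (1 - r\<^sup>2 + r * c)"
    by (simp add: \<omega>(1) cc power2_eq_square)
  finally have "expval H y = 0" by (simp add: rr)
  then show ?thesis by (intro that[of y]) (auto simp: y_def fun_eq_iff)
qed

lemma op2_unit_eigenvector:
  fixes G :: "(2,2) op"
  obtains u lam where "cnj (u 0) * u 0 + cnj (u 1) * u 1 = 1" "op_apply G u = (\<lambda>i. lam * u i)"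
proof (cases "G 0 1 = 0")
  case True
  have "op_apply G (ket 1) = (\<lambda>i. G 1 1 * ket 1 i)"
    using True by (intro vec2_eqI) (simp_all add: op_apply_2 ket_def)
  then show ?thesis by (intro that[of "ket 1" "G 1 1"]) (simp_all add: ket_def)
next
  case False
  obtain lam where lam: "1 * lam\<^sup>2 + (- (G 0 0 + G 1 1)) * lam + (G 0 0 * G 1 1 - G 0 1 * G 1 0) = 0"
    by (rule complex_quadratic_root[of 1 "- (G 0 0 + G 1 1)" "G 0 0 * G 1 1 - G 0 1 * G 1 0"]) auto
  define v where "v = (\<lambda>i::2. if i = 0 then G 0 1 else lam - G 0 0)"
  have "G 1 0 * G 0 1 + G 1 1 * (lam - G 0 0) = lam * (lam - G 0 0)"
    using lam by (simp add: power2_eq_square algebra_simps)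
  then have av: "op_apply G v = (\<lambda>i. lam * v i)"
    by (intro vec2_eqI) (simp_all add: op_apply_2 v_def algebra_simps)
  define n where "n = (cmod (v 0))\<^sup>2 + (cmod (v 1))\<^sup>2"
  have "v \<noteq> (\<lambda>_. 0)" using False vec2_nonzero_iff by (auto simp: v_def)
  then have npos: "0 < n" using vec2_nonzero_iff[of v] by (auto simp: n_def add_pos_nonneg add_nonneg_pos)
  define r where "r = complex_of_real (sqrt n)"
  have rr: "r * r = of_real n" "r \<noteq> 0" "cnj r = r"
    using of_real_sqrt_mult_self[of n] npos by (auto simp: r_def)
  define u where "u = (\<lambda>i. v i / r)"
  have "cnj (u 0) * u 0 + cnj (u 1) * u 1 = (cnj (v 0) * v 0 + cnj (v 1) * v 1) / (r * r)"
    by (simp add: u_def rr(3) add_divide_distrib)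
  also have "cnj (v 0) * v 0 + cnj (v 1) * v 1 = of_real n"
    by (simp add: n_def cnj_mult_self)
  finally have "cnj (u 0) * u 0 + cnj (u 1) * u 1 = of_real n / (r * r)" .
  then have "cnj (u 0) * u 0 + cnj (u 1) * u 1 = 1" using rr npos by simp
  moreover have "op_apply G u = (\<lambda>i. lam * u i)"
    using av rr(2) by (intro vec2_eqI) (simp_all add: op_apply_2 u_def field_simps fun_eq_iff)
  ultimately show ?thesis by (rule that)
qed


lemma outer_eq_if_parallel_same_norm:
  fixes e f :: "2 \<Rightarrow> complex"
  assumes d: "e 0 * f 1 - e 1 * f 0 = 0"
    and tr: "cnj (e 0) * e 0 + cnj (e 1) * e 1 = cnj (f 0) * f 0 + cnj (f 1) * f 1"
  shows "outer e e = outer f f"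
proof (cases "e = (\<lambda>_. 0)")
  case True
  then have "cnj (f 0) * f 0 + cnj (f 1) * f 1 = 0" using tr by simp
  then have "f = (\<lambda>_. 0)" using vec2_norm_sq_nonzero by blast
  then show ?thesis using True by (simp add: outer_def)
next
  case False
  have "\<exists>c. f = (\<lambda>i. c * e i)"
  proof (cases "e 0 = 0")
    case True
    then have e1: "e 1 \<noteq> 0" using False vec2_nonzero_iff by blast
    have "f 0 = 0" using d True e1 by simp
    then show ?thesis using True e1 by (intro exI[of _ "f 1 / e 1"] vec2_eqI) simp_all
  next
    case f0: False
    have "f 1 = f 0 / e 0 * e 1" using d f0 by (simp add: field_simps)
    then show ?thesis using f0 by (intro exI[of _ "f 0 / e 0"] vec2_eqI) simp_all
  qed
  then obtain c where c: "f = (\<lambda>i. c * e i)" by blast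
  define N where "N = cnj (e 0) * e 0 + cnj (e 1) * e 1"
  have N: "N \<noteq> 0" using vec2_norm_sq_nonzero[OF False] N_def by simp
  have "cnj (f 0) * f 0 + cnj (f 1) * f 1 = cnj c * c * N" by (simp add: c N_def algebra_simps)
  then have "N = cnj c * c * N" using tr N_def by simp
  then have cc: "cnj c * c = 1" using N by simp
  then have cc': "c * cnj c = 1" by (simp add: mult.commute)
  show ?thesis
  proof (intro ext)
    fix i j
    have "outer f f i j = (c * cnj c) * (e i * cnj (e j))" by (simp add: outer_def c algebra_simps)
    then show "outer e e i j = outer f f i j" by (simp add: cc' outer_def)
  qed
qed

lemma psd2_subtract_E00_bounded:
  fixes Y :: "(2,2) op"
  assumes "psd Y" "0 \<le> c"
  obtains t where "0 \<le> t" "t \<le> c" "psd (\<lambda>i j. Y i j - of_real t * E00 i j)"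
    and "t = c \<or> det2 (\<lambda>i j. Y i j - of_real t * E00 i j) = 0"
proof -
  obtain tY where tY: "0 \<le> tY" "\<And>s. 0 \<le> s \<Longrightarrow> s \<le> tY \<Longrightarrow> psd (\<lambda>i j. Y i j - of_real s * E00 i j)"
    "det2 (\<lambda>i j. Y i j - of_real tY * E00 i j) = 0"
    using psd2_subtract_E00[OF assms(1)] by blast
  show ?thesis
    using that[of "min c tY"] tY assms(2) by (simp add: min_def)
qed

lemma outer2_congruent_E00:
  fixes x :: "2 \<Rightarrow> complex"
  assumes "x \<noteq> (\<lambda>_. 0)"
  obtains U c where "op_mult (inv2 U) U = id_op" "0 \<le> c" "sandwich U (outer x x) = (\<lambda>i j. of_real c * E00 i j)"
proof -
  define U :: "(2,2) op" where "U = (\<lambda>i j. if i = 0 then cnj (x j) else (if j = 0 then - x 1 else x 0))"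
  define c where "c = cnj (x 0) * x 0 + cnj (x 1) * x 1"
  have "c \<noteq> 0" using vec2_norm_sq_nonzero[OF assms] c_def by simp
  moreover have "det2 U = c" by (simp add: det2_def U_def c_def)
  ultimately have inv: "op_mult (inv2 U) U = id_op" using op_mult_inv2[of U] by simp
  have Ux: "op_apply U x = (\<lambda>i. if i = 0 then c else 0)"
    by (rule vec2_eqI) (simp_all add: op_apply_2 U_def c_def)
  have cc: "c * cnj c = (complex_of_real (cmod c))\<^sup>2" using complex_norm_square by simp
  have "sandwich U (outer x x) = (\<lambda>i j. of_real ((cmod c)\<^sup>2) * E00 i j)"
    unfolding sandwich_outer Ux by (rule op2_eqI) (simp_all add: outer_def cc)
  then show ?thesis using that[OF inv, of "(cmod c)\<^sup>2"] by simp
qed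

lemma psd2_common_subtraction_singular:
  fixes X Y :: "(2,2) op"
  assumes pX: "psd X" and dX: "det2 X = 0" and pY: "psd Y"
  obtains G where "psd G" "psd (\<lambda>i j. X i j - G i j)" "psd (\<lambda>i j. Y i j - G i j)"
    and "(\<lambda>i j. X i j - G i j) = (\<lambda>i j. 0) \<or> (det2 (\<lambda>i j. X i j - G i j) = 0 \<and> det2 (\<lambda>i j. Y i j - G i j) = 0)"
proof -
  obtain x where X: "X = outer x x" using psd2_singular_outer[OF pX dX] by blast
  show ?thesis
  proof (cases "x = (\<lambda>_. 0)")
    case True
    then have "X = (\<lambda>i j. 0)" using X by (simp add: outer_def)
    then show ?thesis using psd_zero pY by (intro that[of "\<lambda>i j. 0"]) simp_all
  next
    case False
    obtain U c where inv: "op_mult (inv2 U) U = id_op" and "0 \<le> c"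
      and X': "sandwich U X = (\<lambda>i j. of_real c * E00 i j)"
      using outer2_congruent_E00[OF False] X by metis
    define Y' where "Y' = sandwich U Y"
    obtain t where t: "0 \<le> t" "t \<le> c" "psd (\<lambda>i j. Y' i j - of_real t * E00 i j)"
      "t = c \<or> det2 (\<lambda>i j. Y' i j - of_real t * E00 i j) = 0"
      using psd2_subtract_E00_bounded[OF psd_sandwich[OF pY] \<open>0 \<le> c\<close>] unfolding Y'_def by blast
    have eX: "(\<lambda>i j. sandwich U X i j - of_real t * E00 i j) = (\<lambda>i j. of_real (c - t) * E00 i j)"
      unfolding X' by (simp add: algebra_simps)
    define G where "G = sandwich (inv2 U) (\<lambda>i j. of_real t * E00 i j)"
    have XG: "(\<lambda>i j. X i j - G i j) = sandwich (inv2 U) (\<lambda>i j. of_real (c - t) * E00 i j)"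
      unfolding eX[symmetric] sandwich_diff G_def sandwich_left_inverse[OF inv] ..
    have YG: "(\<lambda>i j. Y i j - G i j) = sandwich (inv2 U) (\<lambda>i j. Y' i j - of_real t * E00 i j)"
      unfolding sandwich_diff G_def Y'_def sandwich_left_inverse[OF inv] ..
    show ?thesis
    proof (rule that)
      show "psd G" unfolding G_def using psd_E00 t(1) by (intro psd_sandwich psd_scale)
      show "psd (\<lambda>i j. X i j - G i j)" unfolding XG by (intro psd_sandwich psd_scale psd_E00) (use t(2) in linarith)
      show "psd (\<lambda>i j. Y i j - G i j)" unfolding YG by (rule psd_sandwich[OF t(3)])
      show "(\<lambda>i j. X i j - G i j) = (\<lambda>i j. 0) \<or>
          (det2 (\<lambda>i j. X i j - G i j) = 0 \<and> det2 (\<lambda>i j. Y i j - G i j) = 0)"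
        using t(4) unfolding XG YG det2_sandwich by (auto simp: det2_def sandwich_zero)
    qed
  qed
qed

lemma psd2_common_subtraction:
  fixes E F :: "(2,2) op"
  assumes pE: "psd E" and pF: "psd F"
  obtains G where "psd G" "psd (\<lambda>i j. E i j - G i j)" "psd (\<lambda>i j. F i j - G i j)"
    and "(\<lambda>i j. E i j - G i j) = (\<lambda>i j. 0) \<or> (\<lambda>i j. F i j - G i j) = (\<lambda>i j. 0) \<or>
      (det2 (\<lambda>i j. E i j - G i j) = 0 \<and> det2 (\<lambda>i j. F i j - G i j) = 0)"
proof -
  obtain tE where tE: "0 \<le> tE" "\<And>s. 0 \<le> s \<Longrightarrow> s \<le> tE \<Longrightarrow> psd (\<lambda>i j. E i j - of_real s * E00 i j)"
      "det2 (\<lambda>i j. E i j - of_real tE * E00 i j) = 0" using psd2_subtract_E00[OF pE] by blast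
  obtain tF where tF: "0 \<le> tF" "\<And>s. 0 \<le> s \<Longrightarrow> s \<le> tF \<Longrightarrow> psd (\<lambda>i j. F i j - of_real s * E00 i j)"
      "det2 (\<lambda>i j. F i j - of_real tF * E00 i j) = 0" using psd2_subtract_E00[OF pF] by blast
  define t where "t = min tE tF"
  define E1 where "E1 = (\<lambda>i j. E i j - of_real t * E00 i j)"
  define F1 where "F1 = (\<lambda>i j. F i j - of_real t * E00 i j)"
  have pE1: "psd E1" and pF1: "psd F1" using tE tF by (simp_all add: E1_def F1_def t_def)
  have pG1: "psd (\<lambda>i j. of_real t * E00 i j)" using psd_E00 tE tF t_def by (intro psd_scale) auto
  have E1: "(\<lambda>i j. E i j - (of_real t * E00 i j + G2 i j)) = (\<lambda>i j. E1 i j - G2 i j)"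
    and F1: "(\<lambda>i j. F i j - (of_real t * E00 i j + G2 i j)) = (\<lambda>i j. F1 i j - G2 i j)" for G2 :: "(2,2) op"
    by (simp_all add: E1_def F1_def algebra_simps)
  consider "det2 E1 = 0" | "det2 F1 = 0"
    using tE(3) tF(3) by (cases "tE \<le> tF") (auto simp: E1_def F1_def t_def min_def)
  then show ?thesis
  proof cases
    case 1
    obtain G2 where "psd G2" "psd (\<lambda>i j. E1 i j - G2 i j)" "psd (\<lambda>i j. F1 i j - G2 i j)"
      "(\<lambda>i j. E1 i j - G2 i j) = (\<lambda>i j. 0) \<or> (det2 (\<lambda>i j. E1 i j - G2 i j) = 0 \<and> det2 (\<lambda>i j. F1 i j - G2 i j) = 0)"
      using psd2_common_subtraction_singular[OF pE1 1 pF1] by blast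
    then show ?thesis using pG1 psd_add E1 F1 by (intro that[of "\<lambda>i j. of_real t * E00 i j + G2 i j"]) auto
  next
    case 2
    obtain G2 where "psd G2" "psd (\<lambda>i j. F1 i j - G2 i j)" "psd (\<lambda>i j. E1 i j - G2 i j)"
      "(\<lambda>i j. F1 i j - G2 i j) = (\<lambda>i j. 0) \<or> (det2 (\<lambda>i j. F1 i j - G2 i j) = 0 \<and> det2 (\<lambda>i j. E1 i j - G2 i j) = 0)"
      using psd2_common_subtraction_singular[OF pF1 2 pE1] by blast
    then show ?thesis using pG1 psd_add E1 F1 by (intro that[of "\<lambda>i j. of_real t * E00 i j + G2 i j"]) auto
  qed
qed

section \<open>Positive partial transpose implies separability for two qubits\<close>

lemma op22_eqI:
  fixes f g :: "(2 \<times> 2, 2 \<times> 2) op"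
  assumes "\<forall>i j k l. f (i, j) (k, l) = g (i, j) (k, l)"
  shows "f = g"
  using assms by (intro op_eqI) auto

lemma vec22_eqI:
  fixes x y :: "2 \<times> 2 \<Rightarrow> complex"
  assumes "x (0,0) = y (0,0)" "x (0,1) = y (0,1)" "x (1,0) = y (1,0)" "x (1,1) = y (1,1)"
  shows "x = y"
proof (intro ext)
  fix p :: "2 \<times> 2"
  obtain i j where "p = (i, j)" by (cases p)
  then show "x p = y p" using assms exhaust_2[of i] exhaust_2[of j] by auto
qed

lemma vec22_nonzero_iff:
  "(x :: 2 \<times> 2 \<Rightarrow> complex) \<noteq> (\<lambda>_. 0) \<longleftrightarrow> x (0,0) \<noteq> 0 \<or> x (0,1) \<noteq> 0 \<or> x (1,0) \<noteq> 0 \<or> x (1,1) \<noteq> 0"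
  using vec22_eqI[of x "\<lambda>_. 0"] by auto

lemma expval_22:
  "expval (\<tau> :: (2 \<times> 2, 2 \<times> 2) op) v =
    (\<Sum>p\<in>{(0,0),(0,1),(1,0),(1,1)}. \<Sum>q\<in>{(0,0),(0,1),(1,0),(1,1)}. cnj (v p) * \<tau> p q * v q)"
proof -
  have "(UNIV :: (2 \<times> 2) set) = {(0,0),(0,1),(1,0),(1,1)}"
    using exhaust_2 by auto
  then show ?thesis by (simp add: expval_def)
qed

lemma op_apply_22:
  "op_apply (\<tau> :: (2 \<times> 2, 2 \<times> 2) op) k =
    (\<lambda>p. \<tau> p (0,0) * k (0,0) + \<tau> p (0,1) * k (0,1) + \<tau> p (1,0) * k (1,0) + \<tau> p (1,1) * k (1,1))"
  by (simp add: op_apply_def sum_UNIV_prod sum_UNIV_2 add.assoc)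

lemma inner_c_22:
  "inner_c (x :: 2 \<times> 2 \<Rightarrow> complex) y =
    cnj (x (0,0)) * y (0,0) + cnj (x (0,1)) * y (0,1) + cnj (x (1,0)) * y (1,0) + cnj (x (1,1)) * y (1,1)"
  by (simp add: inner_c_def sum_UNIV_prod sum_UNIV_2 add.assoc)

definition coeff_det :: "(2 \<times> 2 \<Rightarrow> complex) \<Rightarrow> complex" where
  "coeff_det k = k (0,0) * k (1,1) - k (0,1) * k (1,0)"

lemma coeff_det_zero_imp_product:
  fixes k :: "2 \<times> 2 \<Rightarrow> complex"
  assumes "coeff_det k = 0" "k \<noteq> (\<lambda>_. 0)"
  obtains a z where "a \<noteq> (\<lambda>_. 0)" "z \<noteq> (\<lambda>_. 0)" "k = tensor_vec a z"
proof (cases "k (0,0) = 0 \<and> k (0,1) = 0")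
  case True
  define z where "z = (\<lambda>j::2. k (1, j))"
  have "k = tensor_vec (ket 1) z" using True by (intro vec22_eqI) (simp_all add: z_def ket_def)
  moreover have "z \<noteq> (\<lambda>_. 0)"
    using assms(2) True vec22_nonzero_iff[of k] vec2_nonzero_iff[of z] by (auto simp: z_def)
  moreover have "ket (1::2) \<noteq> (\<lambda>_. 0)" by (auto simp: ket_def fun_eq_iff)
  ultimately show ?thesis using that by blast
next
  case False
  define z where "z = (\<lambda>j::2. k (0, j))"
  define r where "r = (if k (0,0) \<noteq> 0 then k (1,0) / k (0,0) else k (1,1) / k (0,1))"
  define a where "a = (\<lambda>i::2. if i = 0 then 1 else r)"
  have d: "k (0,0) * k (1,1) = k (0,1) * k (1,0)" using assms(1) by (simp add: coeff_det_def)
  have "k = tensor_vec a z"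
  proof (cases "k (0,0) = 0")
    case True
    then have "k (0,1) \<noteq> 0" using False by simp
    moreover have "k (1,0) = 0" using d True \<open>k (0,1) \<noteq> 0\<close> by simp
    ultimately show ?thesis using True by (intro vec22_eqI) (simp_all add: a_def z_def r_def)
  next
    case nz: False
    have "k (1,1) = k (1,0) / k (0,0) * k (0,1)" using d nz by (simp add: field_simps)
    then show ?thesis using nz by (intro vec22_eqI) (simp_all add: a_def z_def r_def)
  qed
  moreover have "z \<noteq> (\<lambda>_. 0)" using False vec2_nonzero_iff[of z] by (auto simp: z_def)
  moreover have "a \<noteq> (\<lambda>_. 0)" by (auto simp: a_def fun_eq_iff)
  ultimately show ?thesis using that by blast
qed

definition block :: "('a \<times> 'b, 'a \<times> 'b) op \<Rightarrow> 'a \<Rightarrow> 'a \<Rightarrow> ('b, 'b) op" where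
  "block \<tau> i k = (\<lambda>j l. \<tau> (i, j) (k, l))"

definition ket_embed :: "'a \<Rightarrow> ('b, 'a \<times> 'b) op" where
  "ket_embed i = (\<lambda>j p. ket (i, j) p)"

lemma sandwich_ket_embed:
  "sandwich (ket_embed i) (\<tau> :: ('a::finite \<times> 'b::finite, 'a \<times> 'b) op) = block \<tau> i i"
  by (intro ext) (simp add: sandwich_def ket_embed_def block_def)

lemma ket_pair_apply: "ket (i, j) (a, l) = ket i a * ket l j"
  by (auto simp: ket_def)

lemma ket_pair: "ket (i, j) = tensor_vec (ket i) (ket j)"
  by (auto simp: ket_def fun_eq_iff)

lemma op_apply_adjoint_ket_embed:
  "op_apply (adjoint (ket_embed i)) (w :: 'b::finite \<Rightarrow> complex) = tensor_vec (ket i) w"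
proof (intro ext)
  fix p :: "'a \<times> 'b"
  obtain a l where p: "p = (a, l)" by (cases p)
  have "op_apply (adjoint (ket_embed i)) w p = (\<Sum>j\<in>UNIV. (ket i a * w j) * ket l j)"
    unfolding p by (simp add: op_apply_def adjoint_def ket_embed_def ket_pair_apply mult_ac)
  also have "\<dots> = ket i a * w l" by (simp only: sum_mult_ket)
  finally show "op_apply (adjoint (ket_embed i)) w p = tensor_vec (ket i) w p" by (simp add: p)
qed

lemma expval_tensor_ket:
  fixes \<tau> :: "('a::finite \<times> 'b::finite, 'a \<times> 'b) op"
  shows "expval \<tau> (tensor_vec (ket i) w) = expval (block \<tau> i i) w"
  by (simp add: sandwich_ket_embed[symmetric] expval_sandwich op_apply_adjoint_ket_embed)

lemma psd_block_diag:
  fixes \<tau> :: "('a::finite \<times> 'b::finite, 'a \<times> 'b) op"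
  shows "psd \<tau> \<Longrightarrow> psd (block \<tau> i i)"
  by (simp add: sandwich_ket_embed[symmetric] psd_sandwich)

text \<open>\<open>lower_block G\<close> is \<open>|1\<rangle>\<langle>1| \<otimes> G\<close>.\<close>

definition lower_block :: "(2,2) op \<Rightarrow> (2 \<times> 2, 2 \<times> 2) op" where
  "lower_block G = (\<lambda>(i,j) (k,l). if i = 1 \<and> k = 1 then G j l else 0)"

lemma separable_lower_block:
  assumes "psd G"
  shows "separable (lower_block G)"
proof -
  obtain u1 u2 where u: "G = (\<lambda>i j. outer u1 u1 i j + outer u2 u2 i j)"
    using psd2_sum_two_outer[OF assms] by metis
  have "lower_block G = (\<lambda>x y. outer (tensor_vec (ket 1) u1) (tensor_vec (ket 1) u1) x y +
      outer (tensor_vec (ket 1) u2) (tensor_vec (ket 1) u2) x y)"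
    by (rule op22_eqI) (simp add: all_2 lower_block_def outer_def ket_def u)
  then show ?thesis using separable_add[OF separable_outer_tensor separable_outer_tensor] by simp
qed

lemma psd_diag_01_zero_entries:
  fixes \<tau> :: "(2 \<times> 2, 2 \<times> 2) op"
  assumes p: "psd \<tau>" and pt: "psd (partial_transpose \<tau>)" and z: "\<tau> (0,1) (0,1) = 0"
  shows "\<tau> (0,1) y = 0" "\<tau> y (0,1) = 0" "\<tau> (0,l) (k,1) = 0" "\<tau> (k,1) (0,l) = 0"
proof -
  show z1: "\<tau> (0,1) y = 0" for y using psd_zero_diag_row[OF p z] by blast
  show "\<tau> y (0,1) = 0" for y using psd_hermitian[OF p] z1 by (metis complex_cnj_zero)
  have "partial_transpose \<tau> (0,1) (0,1) = 0" using z by simp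
  then show z3: "\<tau> (0,l) (k,1) = 0" for k l
    using psd_zero_diag_row[OF pt] by (metis partial_transpose_apply)
  show "\<tau> (k,1) (0,l) = 0" for k l using psd_hermitian[OF p] z3 by (metis complex_cnj_zero)
qed

lemma ppt22_separable_if_diag_01_zero:
  fixes \<tau> :: "(2 \<times> 2, 2 \<times> 2) op"
  assumes p: "psd \<tau>" and pt: "psd (partial_transpose \<tau>)" and z: "\<tau> (0,1) (0,1) = 0"
  shows "separable \<tau>"
proof -
  note z = psd_diag_01_zero_entries[OF p pt z]
  define C where "C = block \<tau> 1 1"
  have C: "\<tau> (1,j) (1,l) = C j l" for j l by (simp add: C_def block_def)
  obtain a where a: "\<tau> (0,0) (0,0) = of_real a" "0 \<le> a"
    using psd_diag_nonneg[OF p, of "(0,0)"] by (auto simp: less_eq_complex_def complex_eq_iff)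
  show ?thesis
  proof (cases "a = 0")
    case True
    then have "\<tau> (0,0) y = 0" "\<tau> y (0,0) = 0" for y
      using psd_zero_diag_row[OF p] psd_hermitian[OF p] a by (metis complex_cnj_zero of_real_0)+
    then have "\<tau> = lower_block C"
      by (intro op22_eqI) (simp add: all_2 lower_block_def z C)
    moreover have "psd C" using psd_block_diag[OF p] by (simp add: C_def)
    ultimately show ?thesis using separable_lower_block by simp
  next
    case False
    then have apos: "0 < a" using a by simp
    define b where "b = \<tau> (0,0) (1,0)"
    have hb: "\<tau> (1,0) (0,0) = cnj b" using psd_hermitian[OF p, of "(1,0)" "(0,0)"] b_def by simp
    \<comment> \<open>split off the product term \<open>|x\<rangle>\<langle>x| \<otimes> |0\<rangle>\<langle>0|\<close> carrying the whole first row of \<open>\<tau>\<close>\<close>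
    define ra where "ra = complex_of_real (sqrt a)"
    have ra: "ra * ra = of_real a" "ra \<noteq> 0" "cnj ra = ra"
      using apos of_real_sqrt_mult_self[of a] by (auto simp: ra_def)
    define x where "x = (\<lambda>i::2. if i = 0 then ra else cnj b / ra)"
    define C' where "C' = (\<lambda>j l. C j l - (if j = 0 \<and> l = 0 then b * cnj b / of_real a else 0))"
    have "psd C'"
      unfolding psd_def
    proof
      fix w :: "2 \<Rightarrow> complex"
      define v where "v = (\<lambda>(i::2, j::2). if i = 0 then (if j = 0 then - b * w 0 / of_real a else 0) else w j)"
      have "expval \<tau> v = expval C' w"
        using apos
        by (simp add: expval_22 v_def z hb a C expval_2 C'_def b_def[symmetric]) (simp add: field_simps)
      then show "0 \<le> expval C' w" using p psd_def by metis
    qed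
    moreover have "\<tau> = (\<lambda>p q. outer (tensor_vec x (ket 0)) (tensor_vec x (ket 0)) p q + lower_block C' p q)"
      using ra apos
      by (intro op22_eqI) (simp add: all_2 outer_def ket_def lower_block_def z hb a C C'_def x_def
          field_simps b_def[symmetric])
    ultimately show ?thesis
      using separable_add[OF separable_outer_tensor separable_lower_block] by simp
  qed
qed

lemma ppt22_separable_if_product_null:
  fixes \<tau> :: "(2 \<times> 2, 2 \<times> 2) op"
  assumes p: "psd \<tau>" and pt: "psd (partial_transpose \<tau>)"
    and a: "a \<noteq> (\<lambda>_. 0)" and z: "z \<noteq> (\<lambda>_. 0)" and e: "expval \<tau> (tensor_vec a z) = 0"
  shows "separable \<tau>"
proof -
  \<comment> \<open>invertible local maps sending \<open>|0\<rangle>\<close> to \<open>a\<close> and \<open>|1\<rangle>\<close> to \<open>z\<close>\<close>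
  define Ma :: "(2,2) op" where
    "Ma = (\<lambda>i j. if i = 0 then (if j = 0 then a 0 else - cnj (a 1)) else (if j = 0 then a 1 else cnj (a 0)))"
  define Nz :: "(2,2) op" where
    "Nz = (\<lambda>i j. if i = 0 then (if j = 0 then - cnj (z 1) else z 0) else (if j = 0 then cnj (z 0) else z 1))"
  define M where "M = adjoint Ma"
  define N where "N = adjoint Nz"
  have aM: "op_apply Ma (ket 0) = a" by (rule vec2_eqI) (simp_all add: op_apply_2 Ma_def ket_def)
  have zN: "op_apply Nz (ket 1) = z" by (rule vec2_eqI) (simp_all add: op_apply_2 Nz_def ket_def)
  define \<tau>' where "\<tau>' = sandwich (tensor_op M N) \<tau>"
  have "\<tau>' (0,1) (0,1) = expval \<tau>' (ket (0,1))" by (simp add: expval_ket)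
  also have "\<dots> = expval \<tau> (tensor_vec a z)"
    by (simp add: \<tau>'_def expval_sandwich adjoint_tensor M_def N_def ket_pair op_apply_tensor aM zN)
  finally have z': "\<tau>' (0,1) (0,1) = 0" using e by simp
  have p': "psd \<tau>'" using psd_sandwich[OF p] \<tau>'_def by simp
  have pt': "psd (partial_transpose \<tau>')"
    using psd_sandwich[OF pt] by (simp add: \<tau>'_def partial_transpose_sandwich)
  have s': "separable \<tau>'" using ppt22_separable_if_diag_01_zero[OF p' pt' z'] .
  have dM: "det2 M \<noteq> 0"
    using vec2_norm_sq_nonzero[OF a] by (simp add: det2_def M_def adjoint_def Ma_def algebra_simps)
  have "det2 N = - (cnj (z 0) * z 0 + cnj (z 1) * z 1)"
    by (simp add: det2_def N_def adjoint_def Nz_def algebra_simps)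
  then have dN: "det2 N \<noteq> 0" using vec2_norm_sq_nonzero[OF z] by (metis neg_equal_0_iff_equal)
  show ?thesis
    using separable_of_sandwich_tensor[OF s'[unfolded \<tau>'_def] op_mult_inv2[OF dM] op_mult_inv2[OF dN]] .
qed

lemma span2_product_vector:
  fixes k0 k1 :: "2 \<times> 2 \<Rightarrow> complex"
  assumes nz0: "k0 \<noteq> (\<lambda>_. 0)" and nz: "\<forall>s. (\<lambda>x. s * k0 x + k1 x) \<noteq> (\<lambda>_. 0)"
  obtains s t where "(\<lambda>x. s * k0 x + t * k1 x) \<noteq> (\<lambda>_. 0)" "coeff_det (\<lambda>x. s * k0 x + t * k1 x) = 0"
proof (cases "coeff_det k0 = 0")
  case True
  then show ?thesis using nz0 by (intro that[of 1 0]) simp_all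
next
  case False
  \<comment> \<open>\<open>coeff_det (s k0 + k1)\<close> is a quadratic polynomial in \<open>s\<close> with leading coefficient \<open>coeff_det k0\<close>\<close>
  define m where
    "m = k0 (0,0) * k1 (1,1) + k1 (0,0) * k0 (1,1) - k0 (0,1) * k1 (1,0) - k1 (0,1) * k0 (1,0)"
  obtain s where s: "coeff_det k0 * s\<^sup>2 + m * s + coeff_det k1 = 0"
    using complex_quadratic_root[OF False] by blast
  have "coeff_det (\<lambda>x. s * k0 x + 1 * k1 x) = coeff_det k0 * s\<^sup>2 + m * s + coeff_det k1"
    by (simp add: coeff_det_def m_def power2_eq_square algebra_simps)
  then show ?thesis using s nz by (intro that[of s 1]) simp_all
qed

lemma ppt22_separable_if_kernel_dim2:
  fixes \<tau> :: "(2 \<times> 2, 2 \<times> 2) op"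
  assumes p: "psd \<tau>" and pt: "psd (partial_transpose \<tau>)"
    and k0: "op_apply \<tau> k0 = (\<lambda>_. 0)" and k1: "op_apply \<tau> k1 = (\<lambda>_. 0)"
    and nz0: "k0 \<noteq> (\<lambda>_. 0)" and nz: "\<forall>s. (\<lambda>x. s * k0 x + k1 x) \<noteq> (\<lambda>_. 0)"
  shows "separable \<tau>"
proof -
  obtain s t where k: "(\<lambda>x. s * k0 x + t * k1 x) \<noteq> (\<lambda>_. 0)" "coeff_det (\<lambda>x. s * k0 x + t * k1 x) = 0"
    using span2_product_vector[OF nz0 nz] by blast
  obtain a z where az: "a \<noteq> (\<lambda>_. 0)" "z \<noteq> (\<lambda>_. 0)" "(\<lambda>x. s * k0 x + t * k1 x) = tensor_vec a z"
    using coeff_det_zero_imp_product[OF k(2) k(1)] by blast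
  have "op_apply \<tau> (\<lambda>x. s * k0 x + t * k1 x) = (\<lambda>_. 0)"
    by (simp add: op_apply_lincomb k0 k1)
  then have "expval \<tau> (tensor_vec a z) = 0"
    by (simp add: expval_eq_inner inner_c_def flip: az(3))
  then show ?thesis using ppt22_separable_if_product_null[OF p pt az(1,2)] by simp
qed

text \<open>\<open>std_form B C\<close> is the block matrix \<open>[[1, B], [B\<^sup>\<dagger>, C]]\<close> with respect to Alice's basis.\<close>

definition std_form :: "(2,2) op \<Rightarrow> (2,2) op \<Rightarrow> (2 \<times> 2, 2 \<times> 2) op" where
  "std_form B C = (\<lambda>(i,j) (k,l). if i = 0 then (if k = 0 then id_op j l else B j l)
                                    else (if k = 0 then cnj (B l j) else C j l))"

lemma std_form_apply [simp]:
  "std_form B C (0,j) (0,l) = id_op j l" "std_form B C (0,j) (1,l) = B j l"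
  "std_form B C (1,j) (0,l) = cnj (B l j)" "std_form B C (1,j) (1,l) = C j l"
  by (simp_all add: std_form_def)

definition transpose_op :: "('x, 'y) op \<Rightarrow> ('y, 'x) op" where
  "transpose_op X = (\<lambda>j l. X l j)"

definition schur :: "(2,2) op \<Rightarrow> (2,2) op \<Rightarrow> (2,2) op" where
  "schur B C = (\<lambda>j l. C j l - op_mult (adjoint B) B j l)"

definition schur_pt :: "(2,2) op \<Rightarrow> (2,2) op \<Rightarrow> (2,2) op" where
  "schur_pt B C = (\<lambda>j l. C j l - op_mult B (adjoint B) j l)"

lemma std_form_of_block:
  fixes \<tau> :: "(2 \<times> 2, 2 \<times> 2) op"
  assumes "psd \<tau>" "block \<tau> 0 0 = id_op"
  shows "\<tau> = std_form (block \<tau> 0 1) (block \<tau> 1 1)"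
proof (rule op22_eqI, intro allI)
  fix i j k l :: 2
  have h0: "\<tau> (0,j) (0,l) = id_op j l" for j l using assms(2) by (metis block_def)
  have h1: "\<tau> (1,j) (0,l) = cnj (\<tau> (0,l) (1,j))" for j l using psd_hermitian[OF assms(1)] by blast
  show "\<tau> (i, j) (k, l) = std_form (block \<tau> 0 1) (block \<tau> 1 1) (i, j) (k, l)"
    using exhaust_2[of i] exhaust_2[of k] by (auto simp: h0 h1 block_def)
qed

lemma expval_std_form:
  "expval (std_form B C) v =
    cnj (v (0,0) + op_apply B (\<lambda>j. v (1,j)) 0) * (v (0,0) + op_apply B (\<lambda>j. v (1,j)) 0) +
    cnj (v (0,1) + op_apply B (\<lambda>j. v (1,j)) 1) * (v (0,1) + op_apply B (\<lambda>j. v (1,j)) 1) +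
    expval (schur B C) (\<lambda>j. v (1,j))"
  by (simp add: expval_22 expval_2 op_apply_2 schur_def op_mult_2 adjoint_def id_op_2 algebra_simps)

lemma psd_std_form_iff: "psd (std_form B C) \<longleftrightarrow> psd (schur B C)"
proof
  assume p: "psd (std_form B C)"
  show "psd (schur B C)" unfolding psd_def
  proof
    fix w :: "2 \<Rightarrow> complex"
    define v where "v = (\<lambda>(i::2, j::2). if i = 0 then - op_apply B w j else w j)"
    have "expval (std_form B C) v = expval (schur B C) w"
      unfolding expval_std_form by (simp add: v_def)
    then show "0 \<le> expval (schur B C) w" using p psd_def by metis
  qed
next
  assume p: "psd (schur B C)"
  show "psd (std_form B C)" unfolding psd_def expval_std_form
    using p psd_def cnj_mult_self_nonneg by (metis add_nonneg_nonneg)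
qed

lemma partial_transpose_std_form: "partial_transpose (std_form B C) = std_form (transpose_op B) (transpose_op C)"
  by (rule op22_eqI) (simp add: all_2 transpose_op_def id_op_2)

lemma expval_transpose_op: "expval (transpose_op X) v = expval X (conj_vec v)"
  unfolding expval_def transpose_op_def conj_vec_def
  by (subst sum.swap) (simp add: mult_ac)

lemma psd_transpose_op_iff: "psd (transpose_op X) \<longleftrightarrow> psd X"
proof
  assume "psd (transpose_op X)"
  then show "psd X" unfolding psd_def
    by (metis expval_transpose_op conj_vec_def complex_cnj_cnj ext)
next
  assume "psd X"
  then show "psd (transpose_op X)" unfolding psd_def by (simp add: expval_transpose_op)
qed

lemma schur_transpose_op: "schur (transpose_op B) (transpose_op C) = transpose_op (schur_pt B C)"
  by (rule op2_eqI) (simp_all add: schur_def schur_pt_def transpose_op_def op_mult_2 adjoint_def mult.commute)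

lemma schur_pt_transpose_op: "schur_pt (transpose_op B) (transpose_op C) = transpose_op (schur B C)"
  by (rule op2_eqI) (simp_all add: schur_def schur_pt_def transpose_op_def op_mult_2 adjoint_def mult.commute)

lemma ppt_std_form_iff: "psd (std_form B C) \<and> psd (partial_transpose (std_form B C)) \<longleftrightarrow> psd (schur B C) \<and> psd (schur_pt B C)"
  by (simp add: psd_std_form_iff partial_transpose_std_form schur_transpose_op psd_transpose_op_iff)


lemma std_form_split: "std_form B C = (\<lambda>x y. std_form B (\<lambda>j l. C j l - G j l) x y + lower_block G x y)"
  by (rule op22_eqI) (simp add: all_2 lower_block_def id_op_2)

lemma std_form_separable_if_schur_zero:
  assumes F: "psd (schur_pt B C)" and E: "schur B C = (\<lambda>_ _. 0)"
  shows "separable (std_form B C)"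
proof -
  have C: "C = op_mult (adjoint B) B" using E by (intro ext) (simp add: schur_def fun_eq_iff)
  have ppt: "psd (std_form B C) \<and> psd (partial_transpose (std_form B C))"
    using ppt_std_form_iff F E psd_zero by simp
  define k0 where "k0 = (\<lambda>(i::2, l::2). if i = 0 then - B l 0 else ket 0 l)"
  define k1 where "k1 = (\<lambda>(i::2, l::2). if i = 0 then - B l 1 else ket 1 l)"
  have a0: "op_apply (std_form B C) k0 = (\<lambda>_. 0)"
    by (rule vec22_eqI) (simp_all add: op_apply_22 k0_def ket_def id_op_2 C op_mult_2 adjoint_def)
  have a1: "op_apply (std_form B C) k1 = (\<lambda>_. 0)"
    by (rule vec22_eqI) (simp_all add: op_apply_22 k1_def ket_def id_op_2 C op_mult_2 adjoint_def)
  have "k0 (1,0) = 1" by (simp add: k0_def ket_def)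
  then have n0: "k0 \<noteq> (\<lambda>_. 0)" by (metis one_neq_zero)
  have n1: "\<forall>s. (\<lambda>x. s * k0 x + k1 x) \<noteq> (\<lambda>_. 0)"
  proof
    fix s
    have "(\<lambda>x. s * k0 x + k1 x) (1,1) = 1" by (simp add: k0_def k1_def ket_def)
    then show "(\<lambda>x. s * k0 x + k1 x) \<noteq> (\<lambda>_. 0)" by (metis one_neq_zero)
  qed
  show ?thesis using ppt22_separable_if_kernel_dim2[OF ppt[THEN conjunct1] ppt[THEN conjunct2] a0 a1 n0 n1] .
qed

lemma std_form_separable_if_schur_pt_zero:
  assumes E: "psd (schur B C)" and F: "schur_pt B C = (\<lambda>_ _. 0)"
  shows "separable (std_form B C)"
proof -
  have "separable (std_form (transpose_op B) (transpose_op C))"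
  proof (rule std_form_separable_if_schur_zero)
    show "psd (schur_pt (transpose_op B) (transpose_op C))" using E by (simp add: schur_pt_transpose_op psd_transpose_op_iff)
    show "schur (transpose_op B) (transpose_op C) = (\<lambda>_ _. 0)" by (simp only: schur_transpose_op F) (simp add: transpose_op_def)
  qed
  then show ?thesis using separable_partial_transpose_iff[of "std_form B C"] by (simp add: partial_transpose_std_form)
qed



text \<open>\<open>std_form B (B\<^sup>\<dagger>B + |g\<rangle>\<langle>g|)\<close> is the sum of the three rank-one projectors onto the columns
  \<open>std_factor B 0\<close>, \<open>std_factor B 1\<close> and \<open>lower_vec g = |1\<rangle> \<otimes> g\<close> of its Gram factorisation.\<close>

definition std_factor :: "(2,2) op \<Rightarrow> 2 \<Rightarrow> (2 \<times> 2 \<Rightarrow> complex)" where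
  "std_factor B j = (\<lambda>(i, l). if i = 0 then ket j l else cnj (B j l))"

definition lower_vec :: "(2 \<Rightarrow> complex) \<Rightarrow> (2 \<times> 2 \<Rightarrow> complex)" where
  "lower_vec g = (\<lambda>(i, l). if i = 0 then 0 else g l)"

abbreviation rank3_form :: "(2,2) op \<Rightarrow> (2 \<Rightarrow> complex) \<Rightarrow> (2 \<times> 2, 2 \<times> 2) op" where
  "rank3_form B g \<equiv> outer3 (std_factor B 0) (std_factor B 1) (lower_vec g)"

abbreviation rank3_comb ::
    "(2,2) op \<Rightarrow> (2 \<Rightarrow> complex) \<Rightarrow> complex \<Rightarrow> complex \<Rightarrow> complex \<Rightarrow> (2 \<times> 2 \<Rightarrow> complex)" where
  "rank3_comb B g w0 w1 w2 \<equiv> comb3 w0 w1 w2 (std_factor B 0) (std_factor B 1) (lower_vec g)"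

lemma std_factor_apply [simp]: "std_factor B j (0,l) = ket j l" "std_factor B j (1,l) = cnj (B j l)"
  by (simp_all add: std_factor_def)

lemma lower_vec_apply [simp]: "lower_vec g (0,l) = 0" "lower_vec g (1,l) = g l"
  by (simp_all add: lower_vec_def)

lemma rank3_form_std_form: "rank3_form B g = std_form B (\<lambda>j l. op_mult (adjoint B) B j l + outer g g j l)"
  by (rule op22_eqI) (simp add: all_2 outer3_def outer_def ket_def op_mult_2 adjoint_def id_op_2)

text \<open>The three factors are linearly independent.\<close>

lemma std_factors_dual_vectors:
  assumes g: "g \<noteq> (\<lambda>_. 0)"
  obtains k0 k1 where "k0 \<noteq> (\<lambda>_. 0)"
    "inner_c (std_factor B 0) k0 = 0" "inner_c (std_factor B 1) k0 = 0" "inner_c (lower_vec g) k0 = 0"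
    "inner_c (std_factor B 0) k1 = w0" "inner_c (std_factor B 1) k1 = w1" "inner_c (lower_vec g) k1 = w2"
proof -
  define q where "q = perp2 g"
  define ng where "ng = cnj (g 0) * g 0 + cnj (g 1) * g 1"
  have ng: "ng \<noteq> 0" using vec2_norm_sq_nonzero[OF g] ng_def by simp
  define m where "m = (\<lambda>l. (w2 / ng) * g l)"
  define k0 where "k0 = (\<lambda>(i::2, l::2). if i = 0 then - op_apply B q l else q l)"
  define k1 where "k1 = (\<lambda>(i::2, l::2). if i = 0 then (if l = 0 then w0 else w1) - op_apply B m l else m l)"
  have "k0 \<noteq> (\<lambda>_. 0)"
  proof
    assume "k0 = (\<lambda>_. 0)"
    then have "q = (\<lambda>_. 0)" by (auto simp: k0_def fun_eq_iff split: prod.splits) (metis zero_neq_one_2(2))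
    then show False using perp2_nonzero[OF g] q_def by simp
  qed
  moreover have "inner_c (std_factor B 0) k0 = 0" "inner_c (std_factor B 1) k0 = 0" "inner_c (lower_vec g) k0 = 0"
    by (simp_all add: inner_c_22 k0_def ket_def op_apply_2 q_def perp2_def algebra_simps)
  moreover have "inner_c (lower_vec g) k1 = w2 / ng * ng"
    by (simp add: inner_c_22 k1_def m_def ng_def algebra_simps add_divide_distrib)
  then have "inner_c (std_factor B 0) k1 = w0" "inner_c (std_factor B 1) k1 = w1" "inner_c (lower_vec g) k1 = w2"
    using ng by (simp_all add: inner_c_22 k1_def ket_def op_apply_2)
  ultimately show ?thesis using that by blast
qed

lemma rank3_form_diff_separable:
  fixes B :: "(2,2) op" and g :: "2 \<Rightarrow> complex" and w0 w1 w2 :: complex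
  defines "\<tau> \<equiv> \<lambda>p q. rank3_form B g p q -
    of_real (1 / ((cmod w0)\<^sup>2 + (cmod w1)\<^sup>2 + (cmod w2)\<^sup>2)) *
    outer (rank3_comb B g w0 w1 w2) (rank3_comb B g w0 w1 w2) p q"
  assumes g: "g \<noteq> (\<lambda>_. 0)" and w: "w0 \<noteq> 0 \<or> w1 \<noteq> 0"
    and pt: "psd (partial_transpose \<tau>)"
  shows "separable \<tau>"
proof -
  define nw where "nw = (cmod w0)\<^sup>2 + (cmod w1)\<^sup>2 + (cmod w2)\<^sup>2"
  define v where "v = rank3_comb B g w0 w1 w2"
  have \<tau>: "\<tau> = (\<lambda>p q. rank3_form B g p q - of_real (1 / nw) * outer v v p q)"
    unfolding \<tau>_def nw_def v_def ..
  have nwpos: "0 < nw" using w by (auto simp: nw_def add_pos_nonneg add_nonneg_pos)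
  have p: "psd \<tau>" unfolding \<tau>_def using nwpos by (intro psd_outer3_diff) (auto simp: nw_def)
  obtain k0 k1 where k0: "k0 \<noteq> (\<lambda>_. 0)"
    "inner_c (std_factor B 0) k0 = 0" "inner_c (std_factor B 1) k0 = 0" "inner_c (lower_vec g) k0 = 0"
    and k1: "inner_c (std_factor B 0) k1 = w0" "inner_c (std_factor B 1) k1 = w1" "inner_c (lower_vec g) k1 = w2"
    using std_factors_dual_vectors[OF g] by metis
  have "op_apply \<tau> k0 = (\<lambda>_. 0)"
    unfolding \<tau> v_def op_apply_diff_scale op_apply_outer3 op_apply_outer inner_c_comb3 k0(2-4) by simp
  moreover have "op_apply \<tau> k1 = (\<lambda>_. 0)"
  proof -
    have "cnj w0 * w0 + cnj w1 * w1 + cnj w2 * w2 = of_real nw"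
      by (simp add: nw_def cnj_mult_self)
    then have "op_apply \<tau> k1 = (\<lambda>p. v p - of_real (1 / nw) * (v p * of_real nw))"
      unfolding \<tau> v_def op_apply_diff_scale op_apply_outer3 op_apply_outer inner_c_comb3 k1
      by (simp add: comb3_def mult_ac)
    then show ?thesis using nwpos by simp
  qed
  moreover have "(\<lambda>x. s * k0 x + k1 x) \<noteq> (\<lambda>_. 0)" for s
  proof
    assume h: "(\<lambda>x. s * k0 x + k1 x) = (\<lambda>_. 0)"
    have "inner_c (std_factor B 0) (\<lambda>x. s * k0 x + k1 x) = w0" "inner_c (std_factor B 1) (\<lambda>x. s * k0 x + k1 x) = w1"
      by (simp_all add: inner_c_lincomb k0 k1)
    then show False using h w by (simp add: inner_c_def)
  qed
  ultimately show ?thesis using ppt22_separable_if_kernel_dim2[OF p pt _ _ k0(1)] by blast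
qed

lemma scalar_with_conj_solution:
  fixes P Q R S :: complex
  assumes "cnj R * Q = cnj P * S" and "P \<noteq> 0 \<or> Q \<noteq> 0"
  obtains \<beta> where "\<beta> * P = R" "cnj \<beta> * Q = S"
proof (cases "P = 0")
  case True
  then have "Q \<noteq> 0" "R = 0" using assms by auto
  then show ?thesis using True by (intro that[of "cnj (S / Q)"]) simp_all
next
  case False
  have "cnj (R / P) * Q = S" using assms(1) False by (simp add: field_simps)
  then show ?thesis using False by (intro that[of "R / P"]) simp_all
qed

lemma perp2_inner_independent:
  fixes e f y :: "2 \<Rightarrow> complex"
  assumes d: "e 0 * f 1 - e 1 * f 0 \<noteq> 0" and y: "y \<noteq> (\<lambda>_. 0)"
  shows "inner_c (perp2 e) y \<noteq> 0 \<or> inner_c (perp2 f) y \<noteq> 0"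
proof (rule ccontr)
  assume "\<not> ?thesis"
  then have h: "e 1 * y 0 = e 0 * y 1" "f 1 * y 0 = f 0 * y 1"
    by (simp_all add: inner_c_2 perp2_def)
  have "(e 0 * f 1 - e 1 * f 0) * y 0 = 0" "(e 0 * f 1 - e 1 * f 0) * y 1 = 0"
    using h by algebra+
  then have "y 0 = 0" "y 1 = 0" using d by simp_all
  then show False using y vec2_nonzero_iff[of y] by simp
qed

lemma common_eigen_solution:
  fixes B :: "(2,2) op" and e f :: "2 \<Rightarrow> complex"
  assumes d: "e 0 * f 1 - e 1 * f 0 \<noteq> 0"
  obtains y \<beta> \<gamma> \<delta> where "y \<noteq> (\<lambda>_. 0)"
    "\<And>l. op_apply (adjoint B) y l + \<gamma> * e l = \<beta> * y l"
    "\<And>l. op_apply B y l + \<delta> * f l = cnj \<beta> * y l"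
proof -
  have enz: "e \<noteq> (\<lambda>_. 0)" and fnz: "f \<noteq> (\<lambda>_. 0)" using d by auto
  define p where "p = perp2 e"
  define q where "q = perp2 f"
  \<comment> \<open>\<open>expval H y = cnj \<langle>p|B\<^sup>\<dagger>y\<rangle> \<langle>q|y\<rangle> - cnj \<langle>p|y\<rangle> \<langle>q|By\<rangle>\<close>, so a null vector of the traceless \<open>H\<close>
    makes \<open>\<beta>\<close> with \<open>\<langle>p|B\<^sup>\<dagger>y\<rangle> = \<beta>\<langle>p|y\<rangle>\<close> and \<open>\<langle>q|By\<rangle> = cnj \<beta> \<langle>q|y\<rangle>\<close> exist\<close>
  define H :: "(2,2) op" where
    "H = (\<lambda>i j. op_apply B p i * cnj (q j) - p i * (cnj (q 0) * B 0 j + cnj (q 1) * B 1 j))"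
  have "H 0 0 + H 1 1 = 0" by (simp add: H_def op_apply_2 algebra_simps)
  then obtain y where y: "y \<noteq> (\<lambda>_. 0)" "expval H y = 0" using traceless2_null_vector by blast
  have "expval H y = cnj (inner_c p (op_apply (adjoint B) y)) * inner_c q y - cnj (inner_c p y) * inner_c q (op_apply B y)"
    by (simp add: H_def expval_2 inner_c_2 op_apply_2 adjoint_def algebra_simps)
  then obtain \<beta> where \<beta>: "\<beta> * inner_c p y = inner_c p (op_apply (adjoint B) y)"
    "cnj \<beta> * inner_c q y = inner_c q (op_apply B y)"
    using scalar_with_conj_solution perp2_inner_independent[OF d y(1)] y(2) unfolding p_def q_def by (metis eq_iff_diff_eq_0)
  define u where "u = (\<lambda>l. \<beta> * y l - op_apply (adjoint B) y l)"
  have "inner_c (perp2 e) u = 0" using \<beta>(1) by (simp add: u_def p_def inner_c_2 algebra_simps)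
  then have u: "u = (\<lambda>l. (inner_c e u / inner_c e e) * e l)" using perp2_orthogonal_imp_parallel[OF enz] by blast
  define u' where "u' = (\<lambda>l. cnj \<beta> * y l - op_apply B y l)"
  have "inner_c (perp2 f) u' = 0" using \<beta>(2) by (simp add: u'_def q_def inner_c_2 algebra_simps)
  then have u': "u' = (\<lambda>l. (inner_c f u' / inner_c f f) * f l)" using perp2_orthogonal_imp_parallel[OF fnz] by blast
  show ?thesis
  proof (rule that[OF y(1)])
    show "op_apply (adjoint B) y l + (inner_c e u / inner_c e e) * e l = \<beta> * y l" for l
      using fun_cong[OF u, of l] unfolding u_def by (metis add.commute diff_add_cancel)
    show "op_apply B y l + (inner_c f u' / inner_c f f) * f l = cnj \<beta> * y l" for l
      using fun_cong[OF u', of l] unfolding u'_def by (metis add.commute diff_add_cancel)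
  qed
qed

lemma partial_transpose_diff:
  "partial_transpose (\<lambda>p q. A p q - c * Z p q) = (\<lambda>p q. partial_transpose A p q - c * partial_transpose Z p q)"
  by (rule op_eqI) simp

lemma partial_transpose_outer_tensor:
  "partial_transpose (outer (tensor_vec x y) (tensor_vec x y)) = outer (tensor_vec x (conj_vec y)) (tensor_vec x (conj_vec y))"
  by (rule op_eqI) (simp add: outer_def conj_vec_def mult_ac)

lemma transpose_op_gram:
  fixes B :: "('x::finite, 'x) op"
  shows "transpose_op (\<lambda>j l. op_mult B (adjoint B) j l + outer f f j l) =
      (\<lambda>j l. op_mult (adjoint (transpose_op B)) (transpose_op B) j l + outer (conj_vec f) (conj_vec f) j l)"
    and "transpose_op (\<lambda>j l. op_mult (adjoint B) B j l + outer e e j l) =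
      (\<lambda>j l. op_mult (transpose_op B) (adjoint (transpose_op B)) j l + outer (conj_vec e) (conj_vec e) j l)"
  by (simp_all add: transpose_op_def op_mult_def adjoint_def outer_def conj_vec_def mult.commute)

lemma op_apply_transpose_op_conj_vec:
  "op_apply (adjoint (transpose_op B)) (conj_vec y) = conj_vec (op_apply B y)"
  "op_apply (transpose_op B) (conj_vec y) = conj_vec (op_apply (adjoint B) y)"
  by (simp_all add: op_apply_def adjoint_def transpose_op_def conj_vec_def cnj_sum)

lemma rank3_comb_eq_tensor:
  assumes "\<And>l. op_apply (adjoint B) y l + \<gamma> * e l = \<beta> * y l"
  shows "rank3_comb B e (y 0) (y 1) \<gamma> = tensor_vec (\<lambda>i. if i = 0 then 1 else \<beta>) y"
proof -
  have "y 0 * cnj (B 0 l) + y 1 * cnj (B 1 l) + \<gamma> * e l = \<beta> * y l" for l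
    using assms[of l] by (simp add: op_apply_2 adjoint_def mult.commute)
  then show ?thesis by (intro vec22_eqI) (simp_all add: comb3_def ket_def)
qed

text \<open>The product vector \<open>(1, \<beta>) \<otimes> y\<close> lies in the range of \<open>std_form B C\<close>, its partial conjugate in the
  range of the partial transpose; subtracting it with the weight allowed on the side where \<open>|\<gamma>| \<ge> |\<delta>|\<close>
  keeps both positive and leaves a kernel of dimension two.\<close>

lemma std_form_separable_if_rank1_case:
  fixes B C :: "(2,2) op" and e f y :: "2 \<Rightarrow> complex"
  assumes C1: "C = (\<lambda>j l. op_mult (adjoint B) B j l + outer e e j l)"
    and C2: "C = (\<lambda>j l. op_mult B (adjoint B) j l + outer f f j l)"
    and e: "e \<noteq> (\<lambda>_. 0)" and y: "y \<noteq> (\<lambda>_. 0)"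
    and c1: "\<And>l. op_apply (adjoint B) y l + \<gamma> * e l = \<beta> * y l"
    and c2: "\<And>l. op_apply B y l + \<delta> * f l = cnj \<beta> * y l"
    and \<gamma>\<delta>: "cmod \<delta> \<le> cmod \<gamma>"
  shows "separable (std_form B C)"
proof -
  define x where "x = (\<lambda>i::2. if i = 0 then 1 else \<beta>)"
  have yy: "y 0 \<noteq> 0 \<or> y 1 \<noteq> 0" using y vec2_nonzero_iff by blast
  have "op_apply (adjoint (transpose_op B)) (conj_vec y) l + cnj \<delta> * conj_vec f l = \<beta> * conj_vec y l" for l
    using arg_cong[OF c2[of l], of cnj] unfolding op_apply_transpose_op_conj_vec by (simp add: conj_vec_def)
  from rank3_comb_eq_tensor[OF this]
  have v': "rank3_comb (transpose_op B) (conj_vec f) (cnj (y 0)) (cnj (y 1)) (cnj \<delta>) = tensor_vec x (conj_vec y)"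
    by (simp add: x_def conj_vec_def)
  have r1: "rank3_form B e = std_form B C" by (simp add: rank3_form_std_form C1)
  have r2: "rank3_form (transpose_op B) (conj_vec f) = partial_transpose (std_form B C)"
    by (simp add: rank3_form_std_form partial_transpose_std_form C2 transpose_op_gram)
  define nw where "nw = (cmod (y 0))\<^sup>2 + (cmod (y 1))\<^sup>2 + (cmod \<gamma>)\<^sup>2"
  have nwpos: "0 < nw" using yy by (auto simp: nw_def add_pos_nonneg add_nonneg_pos)
  define \<tau> where "\<tau> = (\<lambda>p q. rank3_form B e p q - of_real (1/nw) * outer (tensor_vec x y) (tensor_vec x y) p q)"
  have "partial_transpose \<tau> = (\<lambda>p q. rank3_form (transpose_op B) (conj_vec f) p q -
      of_real (1/nw) * outer (tensor_vec x (conj_vec y)) (tensor_vec x (conj_vec y)) p q)"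
    unfolding \<tau>_def partial_transpose_diff partial_transpose_outer_tensor r1 r2 ..
  moreover have "psd (\<lambda>p q. rank3_form (transpose_op B) (conj_vec f) p q -
      of_real (1/nw) * outer (tensor_vec x (conj_vec y)) (tensor_vec x (conj_vec y)) p q)"
    unfolding v'[symmetric]
  proof (rule psd_outer3_diff)
    show "1 / nw * ((cmod (cnj (y 0)))\<^sup>2 + (cmod (cnj (y 1)))\<^sup>2 + (cmod (cnj \<delta>))\<^sup>2) \<le> 1"
      using nwpos \<gamma>\<delta> by (simp add: nw_def field_simps power_mono)
  qed (use nwpos in simp)
  ultimately have "psd (partial_transpose \<tau>)" by simp
  then have "separable \<tau>"
    using rank3_form_diff_separable[OF e yy] by (simp add: \<tau>_def nw_def x_def flip: rank3_comb_eq_tensor[OF c1])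
  moreover have "std_form B C = (\<lambda>p q. \<tau> p q + of_real (1/nw) * outer (tensor_vec x y) (tensor_vec x y) p q)"
    by (simp add: \<tau>_def r1)
  ultimately show ?thesis using separable_add_product[of \<tau> "1/nw" x y] nwpos by simp
qed

lemma std_form_separable_if_rank1_independent:
  fixes B C :: "(2,2) op" and e f :: "2 \<Rightarrow> complex"
  assumes C1: "C = (\<lambda>j l. op_mult (adjoint B) B j l + outer e e j l)"
    and C2: "C = (\<lambda>j l. op_mult B (adjoint B) j l + outer f f j l)"
    and d: "e 0 * f 1 - e 1 * f 0 \<noteq> 0"
  shows "separable (std_form B C)"
proof -
  obtain y \<beta> \<gamma> \<delta> where y: "y \<noteq> (\<lambda>_. 0)" and c1: "\<And>l. op_apply (adjoint B) y l + \<gamma> * e l = \<beta> * y l"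
    and c2: "\<And>l. op_apply B y l + \<delta> * f l = cnj \<beta> * y l"
    using common_eigen_solution[OF d] by metis
  have e: "e \<noteq> (\<lambda>_. 0)" and f: "f \<noteq> (\<lambda>_. 0)" using d by auto
  show ?thesis
  proof (cases "cmod \<delta> \<le> cmod \<gamma>")
    case True
    then show ?thesis using std_form_separable_if_rank1_case[OF C1 C2 e y c1 c2] by blast
  next
    case False
    \<comment> \<open>the partial transpose exchanges the roles of \<open>(e, \<gamma>)\<close> and \<open>(conj f, cnj \<delta>)\<close>\<close>
    have tC: "transpose_op C = (\<lambda>j l. op_mult (adjoint (transpose_op B)) (transpose_op B) j l +
        outer (conj_vec f) (conj_vec f) j l)"
      "transpose_op C = (\<lambda>j l. op_mult (transpose_op B) (adjoint (transpose_op B)) j l +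
        outer (conj_vec e) (conj_vec e) j l)"
      using transpose_op_gram(1)[of B f] transpose_op_gram(2)[of B e] C1 C2 by simp_all
    have tc: "op_apply (adjoint (transpose_op B)) (conj_vec y) l + cnj \<delta> * conj_vec f l = \<beta> * conj_vec y l"
      "op_apply (transpose_op B) (conj_vec y) l + cnj \<gamma> * conj_vec e l = cnj \<beta> * conj_vec y l" for l
      using arg_cong[OF c2[of l], of cnj] arg_cong[OF c1[of l], of cnj]
      unfolding op_apply_transpose_op_conj_vec by (simp_all add: conj_vec_def)
    have nz: "conj_vec f \<noteq> (\<lambda>_. 0)" "conj_vec y \<noteq> (\<lambda>_. 0)"
      using f y by (auto simp: conj_vec_def fun_eq_iff)
    have "separable (std_form (transpose_op B) (transpose_op C))"
      using std_form_separable_if_rank1_case[OF tC nz tc] False by simp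
    then show ?thesis by (simp add: partial_transpose_std_form[symmetric] separable_partial_transpose_iff)
  qed
qed

lemma trace_schur_eq_trace_schur_pt: "schur B C 0 0 + schur B C 1 1 = schur_pt B C 0 0 + schur_pt B C 1 1"
  by (simp add: schur_def schur_pt_def op_mult_2 adjoint_def algebra_simps)

lemma std_form_separable_if_rank1_parallel:
  fixes B C :: "(2,2) op" and e f :: "2 \<Rightarrow> complex"
  assumes C1: "C = (\<lambda>j l. op_mult (adjoint B) B j l + outer e e j l)"
    and C2: "C = (\<lambda>j l. op_mult B (adjoint B) j l + outer f f j l)"
    and d: "e 0 * f 1 - e 1 * f 0 = 0"
  shows "separable (std_form B C)"
proof -
  have "schur B C = outer e e" unfolding schur_def by (subst C1) simp
  moreover have "schur_pt B C = outer f f" unfolding schur_pt_def by (subst C2) simp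
  ultimately have "cnj (e 0) * e 0 + cnj (e 1) * e 1 = cnj (f 0) * f 0 + cnj (f 1) * f 1"
    using trace_schur_eq_trace_schur_pt[of B C] by (simp add: outer_def mult.commute)
  then have ef: "outer e e = outer f f" using outer_eq_if_parallel_same_norm[OF d] by simp
  define C' where "C' = (\<lambda>j l. C j l - outer e e j l)"
  have "schur B C' = (\<lambda>i j. 0)" by (simp add: schur_def C'_def C1)
  moreover have "schur_pt B C' = (\<lambda>i j. 0)" by (simp add: schur_pt_def C'_def ef) (simp add: C2)
  ultimately have "separable (std_form B C')"
    using std_form_separable_if_schur_zero psd_zero by metis
  moreover have "std_form B C = (\<lambda>x y. std_form B C' x y + lower_block (outer e e) x y)"
    unfolding C'_def by (rule std_form_split)
  ultimately show ?thesis using separable_add[OF _ separable_lower_block[OF psd_outer[of e]]] by simp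
qed

lemma std_form_separable_if_singular_schurs:
  fixes B C :: "(2,2) op"
  assumes "psd (schur B C)" "psd (schur_pt B C)" "det2 (schur B C) = 0" "det2 (schur_pt B C) = 0"
  shows "separable (std_form B C)"
proof -
  obtain e where e: "schur B C = outer e e" using psd2_singular_outer assms(1,3) by metis
  obtain f where f: "schur_pt B C = outer f f" using psd2_singular_outer assms(2,4) by metis
  have "C = (\<lambda>j l. op_mult (adjoint B) B j l + outer e e j l)"
    using e by (auto simp: schur_def fun_eq_iff diff_eq_eq)
  moreover have "C = (\<lambda>j l. op_mult B (adjoint B) j l + outer f f j l)"
    using f by (auto simp: schur_pt_def fun_eq_iff diff_eq_eq)
  ultimately show ?thesis
    using std_form_separable_if_rank1_independent std_form_separable_if_rank1_parallel by blast
qed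

lemma std_form_separable:
  fixes B C :: "(2,2) op"
  assumes "psd (schur B C)" and "psd (schur_pt B C)"
  shows "separable (std_form B C)"
proof -
  obtain G where G: "psd G" "psd (\<lambda>i j. schur B C i j - G i j)" "psd (\<lambda>i j. schur_pt B C i j - G i j)"
     "(\<lambda>i j. schur B C i j - G i j) = (\<lambda>i j. 0) \<or> (\<lambda>i j. schur_pt B C i j - G i j) = (\<lambda>i j. 0) \<or>
      (det2 (\<lambda>i j. schur B C i j - G i j) = 0 \<and> det2 (\<lambda>i j. schur_pt B C i j - G i j) = 0)"
    using psd2_common_subtraction[OF assms] by blast
  \<comment> \<open>moving \<open>G\<close> out of \<open>C\<close> splits off the separable part \<open>|1\<rangle>\<langle>1| \<otimes> G\<close>\<close>
  define C' where "C' = (\<lambda>j l. C j l - G j l)"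
  have E: "schur B C' = (\<lambda>i j. schur B C i j - G i j)" by (simp add: schur_def C'_def algebra_simps)
  have F: "schur_pt B C' = (\<lambda>i j. schur_pt B C i j - G i j)" by (simp add: schur_pt_def C'_def algebra_simps)
  have "separable (std_form B C')"
    using G(2-4) std_form_separable_if_schur_zero[of B C'] std_form_separable_if_schur_pt_zero[of B C']
      std_form_separable_if_singular_schurs[of B C'] unfolding E F by blast
  moreover have "std_form B C = (\<lambda>x y. std_form B C' x y + lower_block G x y)"
    unfolding C'_def by (rule std_form_split)
  ultimately show ?thesis using separable_add separable_lower_block[OF G(1)] by simp
qed

lemma block_sandwich_id_tensor:
  fixes \<tau> :: "(2 \<times> 2, 2 \<times> 2) op"
  shows "block (sandwich (tensor_op id_op N) \<tau>) i k = sandwich N (block \<tau> i k)"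
proof (intro ext)
  fix j l
  show "block (sandwich (tensor_op id_op N) \<tau>) i k j l = sandwich N (block \<tau> i k) j l"
    using exhaust_2[of i] exhaust_2[of k]
    by (auto simp: block_def sandwich_def sum_UNIV_prod sum_UNIV_2 id_op_2)
qed

theorem ppt_imp_separable_2x2:
  fixes \<tau> :: "(2 \<times> 2, 2 \<times> 2) op"
  assumes p: "psd \<tau>" and pt: "psd (partial_transpose \<tau>)"
  shows "separable \<tau>"
proof (cases "det2 (block \<tau> 0 0) = 0")
  case True
  obtain z where z: "z \<noteq> (\<lambda>_. 0)" "expval (block \<tau> 0 0) z = 0"
    using psd2_singular_null_vector[OF psd_block_diag[OF p] True] by blast
  have "ket (0::2) \<noteq> (\<lambda>_. 0)" by (auto simp: ket_def fun_eq_iff)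
  then show ?thesis using ppt22_separable_if_product_null[OF p pt _ z(1)] z(2) expval_tensor_ket by metis
next
  case False
  obtain N where N: "det2 N \<noteq> 0" "sandwich N (block \<tau> 0 0) = id_op"
    using psd2_congruent_id[OF psd_block_diag[OF p] False] by blast
  define \<tau>' where "\<tau>' = sandwich (tensor_op id_op N) \<tau>"
  have p': "psd \<tau>'" using psd_sandwich[OF p] \<tau>'_def by simp
  have pt': "psd (partial_transpose \<tau>')" using psd_sandwich[OF pt] by (simp add: \<tau>'_def partial_transpose_sandwich)
  have "block \<tau>' 0 0 = id_op" using N(2) by (simp add: \<tau>'_def block_sandwich_id_tensor)
  then have eq: "\<tau>' = std_form (block \<tau>' 0 1) (block \<tau>' 1 1)" using std_form_of_block[OF p'] by blast
  then have "psd (schur (block \<tau>' 0 1) (block \<tau>' 1 1)) \<and> psd (schur_pt (block \<tau>' 0 1) (block \<tau>' 1 1))"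
    using ppt_std_form_iff p' pt' by metis
  then have "separable \<tau>'" using std_form_separable eq by metis
  then show ?thesis using separable_of_sandwich_tensor[of id_op N \<tau> id_op "inv2 N"] op_mult_inv2[OF N(1)]
    by (simp add: \<tau>'_def op_mult_id_left)
qed

section \<open>Schmidt decomposition in \<open>H_2 \<otimes> H_m\<close>\<close>

text \<open>Combining the two rows \<open>\<psi>(0, -)\<close>, \<open>\<psi>(1, -)\<close> along an orthonormal eigenbasis of their Gram matrix
  yields two orthogonal vectors.\<close>

lemma orthogonal_decomposition_2xm:
  fixes \<psi> :: "2 \<times> 'b::finite \<Rightarrow> complex"
  obtains a0 a1 :: "2 \<Rightarrow> complex" and b0 b1 :: "'b \<Rightarrow> complex"
  where "orthonormal2 a0 a1" "inner_c b0 b1 = 0" "\<psi> = (\<lambda>p. tensor_vec a0 b0 p + tensor_vec a1 b1 p)"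
proof -
  define G :: "(2,2) op" where "G = (\<lambda>i k. inner_c (\<lambda>j. \<psi> (i,j)) (\<lambda>j. \<psi> (k,j)))"
  define \<chi> where "\<chi> v = (\<lambda>j. v 0 * \<psi> (0,j) + v 1 * \<psi> (1,j))" for v :: "2 \<Rightarrow> complex"
  have i\<chi>: "inner_c (\<chi> v) (\<chi> v') = inner_c v (op_apply G v')" for v v'
  proof -
    have "inner_c (\<chi> v) (\<chi> v') =
        cnj (v 0) * (v' 0 * G 0 0 + v' 1 * G 0 1) + cnj (v 1) * (v' 0 * G 1 0 + v' 1 * G 1 1)"
      unfolding \<chi>_def G_def inner_c_add_left inner_c_add_right inner_c_scale_left inner_c_scale_right
      by (simp add: algebra_simps)
    then show ?thesis by (simp add: inner_c_2 op_apply_2 algebra_simps)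
  qed
  have "G i k = cnj (G k i)" for i k by (simp add: G_def inner_c_commute_cnj[of "\<lambda>j. \<psi> (i,j)"])
  then have g: "G 1 0 = cnj (G 0 1)" "cnj (G 0 0) = G 0 0" "cnj (G 1 1) = G 1 1"
    by (metis complex_cnj_cnj)+
  obtain u lam where u: "cnj (u 0) * u 0 + cnj (u 1) * u 1 = 1" "op_apply G u = (\<lambda>i. lam * u i)"
    using op2_unit_eigenvector[of G] by blast
  define w where "w = (\<lambda>i::2. if i = 0 then - cnj (u 1) else cnj (u 0))"
  have "inner_c (\<chi> u) (\<chi> w) = cnj (inner_c w (op_apply G u))"
    unfolding i\<chi> by (simp add: inner_c_2 op_apply_2 g algebra_simps)
  also have "\<dots> = 0" by (simp add: u(2) inner_c_scale_right) (simp add: inner_c_2 w_def algebra_simps)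
  finally have orth: "inner_c (\<chi> u) (\<chi> w) = 0" .
  have h: "cnj (u 0) * u 0 + cnj (w 0) * w 0 = 1" "cnj (u 0) * u 1 + cnj (w 0) * w 1 = 0"
    "cnj (u 1) * u 0 + cnj (w 1) * w 0 = 0" "cnj (u 1) * u 1 + cnj (w 1) * w 1 = 1"
    using u(1) by (simp_all add: w_def algebra_simps)
  have "\<psi> (i, j) = cnj (u i) * \<chi> u j + cnj (w i) * \<chi> w j" for i j
  proof -
    have "cnj (u i) * \<chi> u j + cnj (w i) * \<chi> w j =
       (cnj (u i) * u 0 + cnj (w i) * w 0) * \<psi> (0,j) + (cnj (u i) * u 1 + cnj (w i) * w 1) * \<psi> (1,j)"
      by (simp add: \<chi>_def algebra_simps)
    then show ?thesis using exhaust_2[of i] h by auto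
  qed
  then have "\<psi> = (\<lambda>p. tensor_vec (conj_vec u) (\<chi> u) p + tensor_vec (conj_vec w) (\<chi> w) p)"
    by (auto simp: conj_vec_def)
  moreover have "inner_c u u = 1" "inner_c w w = 1" "inner_c u w = 0"
    using u(1) by (simp_all add: inner_c_2 w_def algebra_simps)
  then have "orthonormal2 (conj_vec u) (conj_vec w)" by (simp add: orthonormal2_def inner_c_conj_vec)
  ultimately show ?thesis using orth that by blast
qed

definition schmidt2_vec ::
    "complex \<Rightarrow> complex \<Rightarrow> ('a \<Rightarrow> complex) \<Rightarrow> ('a \<Rightarrow> complex) \<Rightarrow> ('b \<Rightarrow> complex) \<Rightarrow> ('b \<Rightarrow> complex) \<Rightarrow> ('a \<times> 'b \<Rightarrow> complex)"
  where "schmidt2_vec c0 c1 a0 a1 b0 b1 = (\<lambda>p. c0 * tensor_vec a0 b0 p + c1 * tensor_vec a1 b1 p)"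

lemma schmidt_decomposition_2xm:
  fixes \<psi> :: "2 \<times> 'b::finite \<Rightarrow> complex"
  obtains (product) a b where "\<psi> = tensor_vec a b"
  | (rank2) s0 s1 :: real and a0 a1 :: "2 \<Rightarrow> complex" and b0 b1 :: "'b \<Rightarrow> complex"
    where "0 < s0" "0 < s1" "orthonormal2 a0 a1" "orthonormal2 b0 b1"
      "\<psi> = schmidt2_vec (of_real s0) (of_real s1) a0 a1 b0 b1"
proof -
  obtain a0 a1 b0 b1 where a: "orthonormal2 a0 a1" and b: "inner_c b0 b1 = 0"
    and \<psi>: "\<psi> = (\<lambda>p. tensor_vec a0 b0 p + tensor_vec a1 b1 p)"
    using orthogonal_decomposition_2xm by blast
  define n0 where "n0 = sqrt (\<Sum>j\<in>UNIV. (cmod (b0 j))\<^sup>2)"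
  define n1 where "n1 = sqrt (\<Sum>j\<in>UNIV. (cmod (b1 j))\<^sup>2)"
  have n: "inner_c b0 b0 = of_real n0 * of_real n0" "inner_c b1 b1 = of_real n1 * of_real n1"
    by (simp_all add: n0_def n1_def inner_c_self sum_nonneg flip: of_real_mult)
  show ?thesis
  proof (cases "n0 = 0 \<or> n1 = 0")
    case True
    then have "inner_c b0 b0 = 0 \<or> inner_c b1 b1 = 0" using n by auto
    then have "b0 = (\<lambda>_. 0) \<or> b1 = (\<lambda>_. 0)" using inner_c_self_eq_0 by blast
    then show ?thesis
    proof
      assume "b0 = (\<lambda>_. 0)"
      then show ?thesis using product[of a1 b1] by (simp add: \<psi> fun_eq_iff)
    next
      assume "b1 = (\<lambda>_. 0)"
      then show ?thesis using product[of a0 b0] by (simp add: \<psi> fun_eq_iff)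
    qed
  next
    case False
    then have pos: "0 < n0" "0 < n1" by (simp_all add: n0_def n1_def sum_nonneg less_le)
    define c0 where "c0 = (\<lambda>j. of_real (1 / n0) * b0 j)"
    define c1 where "c1 = (\<lambda>j. of_real (1 / n1) * b1 j)"
    have "orthonormal2 c0 c1"
      unfolding orthonormal2_def c0_def c1_def inner_c_scale_left inner_c_scale_right n b
      using pos by (simp add: field_simps)
    moreover have "\<psi> = schmidt2_vec (of_real n0) (of_real n1) a0 a1 c0 c1"
      using pos by (simp add: \<psi> schmidt2_vec_def c0_def c1_def fun_eq_iff field_simps)
    ultimately show ?thesis using rank2 pos a by blast
  qed
qed

lemma orthonormal2_sym:
  "orthonormal2 a0 a1 \<Longrightarrow> inner_c a1 a0 = 0"
  using inner_c_commute_cnj[of a1 a0] by (simp add: orthonormal2_def)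

lemma all_less_2: "(\<forall>t<(2::nat). P t) \<longleftrightarrow> P 0 \<and> P 1"
  by (auto simp: less_2_cases_iff)

lemma orthonormal_family_2_iff:
  fixes c :: "nat \<Rightarrow> 'x::finite \<Rightarrow> complex"
  shows "(\<forall>t<2. \<forall>t'<2. inner_c (c t) (c t') = (if t = t' then 1 else 0)) \<longleftrightarrow> orthonormal2 (c 0) (c 1)"
  using orthonormal2_sym[of "c 0" "c 1"] by (auto simp: all_less_2 orthonormal2_def)

lemma schmidt_rank_2_iff:
  fixes \<phi> :: "'a::finite \<times> 'b::finite \<Rightarrow> complex"
  shows "schmidt_rank 2 \<phi> \<longleftrightarrow> (\<exists>s0 s1 a0 a1 b0 b1. 0 < s0 \<and> 0 < s1 \<and> orthonormal2 a0 a1 \<and> orthonormal2 b0 b1 \<and>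
     \<phi> = schmidt2_vec (of_real s0) (of_real s1) a0 a1 b0 b1)" (is "_ \<longleftrightarrow> ?R")
proof -
  have sum2: "(\<lambda>(i, j). \<Sum>t<(2::nat). complex_of_real (s t) * a t i * b t j) =
      schmidt2_vec (of_real (s 0)) (of_real (s 1)) (a 0) (a 1) (b 0) (b 1)"
    for s :: "nat \<Rightarrow> real" and a :: "nat \<Rightarrow> 'a \<Rightarrow> complex" and b :: "nat \<Rightarrow> 'b \<Rightarrow> complex"
    by (auto simp: schmidt2_vec_def numeral_2_eq_2 mult_ac fun_eq_iff)
  have "schmidt_rank 2 \<phi> \<longleftrightarrow> (\<exists>(s::nat \<Rightarrow> real) (a::nat \<Rightarrow> 'a \<Rightarrow> complex) (b::nat \<Rightarrow> 'b \<Rightarrow> complex).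
      0 < s 0 \<and> 0 < s 1 \<and> orthonormal2 (a 0) (a 1) \<and> orthonormal2 (b 0) (b 1) \<and>
      \<phi> = schmidt2_vec (of_real (s 0)) (of_real (s 1)) (a 0) (a 1) (b 0) (b 1))"
    unfolding schmidt_rank_def sum2 orthonormal_family_2_iff unfolding all_less_2 by (simp only: conj_assoc)
  also have "\<dots> \<longleftrightarrow> ?R"
  proof
    assume ?R
    then obtain s0 s1 a0 a1 b0 b1 where "0 < s0" "0 < s1" "orthonormal2 a0 a1" "orthonormal2 b0 b1"
      "\<phi> = schmidt2_vec (of_real s0) (of_real s1) a0 a1 b0 b1" by blast
    then show "\<exists>(s::nat \<Rightarrow> real) (a::nat \<Rightarrow> 'a \<Rightarrow> complex) (b::nat \<Rightarrow> 'b \<Rightarrow> complex).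
      0 < s 0 \<and> 0 < s 1 \<and> orthonormal2 (a 0) (a 1) \<and> orthonormal2 (b 0) (b 1) \<and>
      \<phi> = schmidt2_vec (of_real (s 0)) (of_real (s 1)) (a 0) (a 1) (b 0) (b 1)"
      by (intro exI[of _ "\<lambda>t. if t = 0 then s0 else s1"] exI[of _ "\<lambda>t. if t = 0 then a0 else a1"]
          exI[of _ "\<lambda>t. if t = 0 then b0 else b1"]) simp
  qed blast
  finally show ?thesis .
qed
lemma op_apply_tensor_schmidt2_vec:
  "op_apply (tensor_op M N) (schmidt2_vec c0 c1 a0 a1 b0 b1) =
    schmidt2_vec c0 c1 (op_apply M a0) (op_apply M a1) (op_apply N b0) (op_apply N b1)"
  unfolding schmidt2_vec_def op_apply_lincomb op_apply_tensor ..

lemma complex_neg_not_nonneg: "(x::complex) < 0 \<Longrightarrow> \<not> 0 \<le> x"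
  by (simp add: less_complex_def less_eq_complex_def)

text \<open>Product vectors have nonnegative expectation in the partial transpose of a positive operator, so a
  witness of non-positivity has two Schmidt terms.\<close>

lemma npt_witness_schmidt_2xm:
  fixes \<sigma> :: "(2 \<times> 'b::finite, 2 \<times> 'b) op"
  assumes p: "psd \<sigma>" and np: "\<not> psd (partial_transpose \<sigma>)"
  obtains s0 s1 a0 a1 b0 b1 where "0 < s0" "0 < s1" "orthonormal2 a0 a1" "orthonormal2 b0 b1"
    "expval (partial_transpose \<sigma>) (schmidt2_vec (of_real s0) (of_real s1) a0 a1 b0 b1) < 0"
proof -
  obtain \<psi> where \<psi>: "\<not> 0 \<le> expval (partial_transpose \<sigma>) \<psi>" using np psd_def by blast
  have "Im (expval (partial_transpose \<sigma>) \<psi>) = 0"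
    by (rule expval_hermitian_real) (rule partial_transpose_hermitian[OF p])
  then have neg: "expval (partial_transpose \<sigma>) \<psi> < 0"
    using \<psi> by (auto simp: less_complex_def less_eq_complex_def)
  show ?thesis
  proof (cases \<psi> rule: schmidt_decomposition_2xm)
    case (product a b)
    then show ?thesis using psd_partial_transpose_product_nonneg[OF p, of a b] \<psi> by simp
  next
    case (rank2 s0 s1 a0 a1 b0 b1)
    then show ?thesis using neg that by blast
  qed
qed

lemma op_apply_adjoint_proj2: "op_apply (adjoint (proj2 a0 a1)) x = (\<lambda>z. x 0 * a0 z + x 1 * a1 z)"
  by (intro ext) (simp add: op_apply_def adjoint_def proj2_def sum_UNIV_2 mult.commute)

lemma op_apply_proj2: "op_apply (proj2 a0 a1) y = (\<lambda>i. if i = 0 then inner_c a0 y else inner_c a1 y)"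
  by (intro ext) (simp add: op_apply_def proj2_def inner_c_def)

lemma inner_c_adjoint_proj2:
  assumes "orthonormal2 a0 a1"
  shows "inner_c (op_apply (adjoint (proj2 a0 a1)) x) (op_apply (adjoint (proj2 a0 a1)) y) = inner_c x y"
  using assms orthonormal2_sym[OF assms]
  unfolding op_apply_adjoint_proj2 inner_c_add_left inner_c_add_right inner_c_scale_left inner_c_scale_right
  by (simp add: orthonormal2_def inner_c_2)

lemma op_apply_proj2_basis:
  assumes "orthonormal2 a0 a1"
  shows "op_apply (proj2 a0 a1) a0 = ket 0" "op_apply (proj2 a0 a1) a1 = ket 1"
  using assms orthonormal2_sym[OF assms]
  by (auto intro!: vec2_eqI simp: op_apply_proj2 orthonormal2_def ket_def)

lemma op_apply_adjoint_proj2_ket: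
  "op_apply (adjoint (proj2 a0 a1)) (ket 0) = a0" "op_apply (adjoint (proj2 a0 a1)) (ket 1) = a1"
  by (simp_all add: op_apply_adjoint_proj2 ket_def)

lemma orthonormal2_conj_vec: "orthonormal2 a0 a1 \<Longrightarrow> orthonormal2 (conj_vec a0) (conj_vec a1)"
  by (simp add: orthonormal2_def inner_c_conj_vec)

lemma is_projection_proj2: "orthonormal2 a0 a1 \<Longrightarrow> is_projection (proj2 a0 a1)"
  by (auto simp: is_projection_def)

section \<open>The equivalences\<close>

lemma entangled_projection_imp_npt:
  fixes \<rho> :: "('a::finite \<times> 'b::finite, 'a \<times> 'b) op" and PA :: "(2, 'a) op" and PB :: "(2, 'b) op"
  assumes ent: "entangled (sandwich (tensor_op PA PB) \<rho>)"
  shows "\<not> psd (partial_transpose (sandwich (tensor_op PA (id_op :: ('b,'b) op)) \<rho>))"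
proof
  assume pt: "psd (partial_transpose (sandwich (tensor_op PA (id_op :: ('b,'b) op)) \<rho>))"
  define \<tau> where "\<tau> = sandwich (tensor_op PA PB) \<rho>"
  have "partial_transpose \<tau> =
      sandwich (tensor_op id_op (conj_op PB)) (partial_transpose (sandwich (tensor_op PA id_op) \<rho>))"
    unfolding \<tau>_def sandwich_tensor_split[of PA PB] by (rule partial_transpose_sandwich)
  then have "psd (partial_transpose \<tau>)" using psd_sandwich[OF pt] by simp
  moreover have "psd \<tau>" using ent by (simp add: entangled_def \<tau>_def)
  ultimately have "separable \<tau>" by (rule ppt_imp_separable_2x2[rotated])
  then show False using ent by (simp add: entangled_def \<tau>_def)
qed

text \<open>Projecting Bob's side onto the conjugated Schmidt vectors of a witness of non-positivity keeps
  the witness.\<close>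

lemma npt_imp_entangled_projection:
  fixes \<rho> :: "('a::finite \<times> 'b::finite, 'a \<times> 'b) op" and PA :: "(2, 'a) op"
  assumes pr: "psd \<rho>" and np: "\<not> psd (partial_transpose (sandwich (tensor_op PA (id_op :: ('b,'b) op)) \<rho>))"
  obtains PB :: "(2, 'b) op" where "is_projection PB" "entangled (sandwich (tensor_op PA PB) \<rho>)"
proof -
  define \<sigma> where "\<sigma> = sandwich (tensor_op PA (id_op :: ('b,'b) op)) \<rho>"
  obtain s0 s1 a0 a1 b0 b1 where b: "orthonormal2 b0 b1"
    and neg: "expval (partial_transpose \<sigma>) (schmidt2_vec (of_real s0) (of_real s1) a0 a1 b0 b1) < 0"
    using npt_witness_schmidt_2xm[OF _ np[folded \<sigma>_def]] psd_sandwich[OF pr] \<sigma>_def by metis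
  define PB where "PB = proj2 (conj_vec b0) (conj_vec b1)"
  define T where "T = tensor_op (id_op :: (2,2) op) (conj_op PB)"
  define \<tau> where "\<tau> = sandwich (tensor_op PA PB) \<rho>"
  have "conj_op PB = proj2 b0 b1" by (intro ext) (simp add: PB_def conj_op_def proj2_def conj_vec_def)
  then have "op_apply (adjoint T) (op_apply T (schmidt2_vec (of_real s0) (of_real s1) a0 a1 b0 b1)) =
      schmidt2_vec (of_real s0) (of_real s1) a0 a1 b0 b1"
    unfolding T_def adjoint_tensor op_apply_tensor_schmidt2_vec
    by (simp add: adjoint_id op_apply_id op_apply_proj2_basis[OF b] op_apply_adjoint_proj2_ket)
  moreover have "partial_transpose \<tau> = sandwich T (partial_transpose \<sigma>)"
    unfolding \<tau>_def \<sigma>_def T_def sandwich_tensor_split[of PA PB] by (rule partial_transpose_sandwich)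
  ultimately have "expval (partial_transpose \<tau>) (op_apply T (schmidt2_vec (of_real s0) (of_real s1) a0 a1 b0 b1)) < 0"
    using neg by (simp add: expval_sandwich)
  then have "\<not> separable \<tau>" using separable_imp_ppt complex_neg_not_nonneg psd_def by blast
  moreover have "is_projection PB" unfolding PB_def by (intro is_projection_proj2 orthonormal2_conj_vec b)
  ultimately show ?thesis using that psd_sandwich[OF pr] by (auto simp: entangled_def \<tau>_def)
qed

lemma npt_imp_schmidt_rank2_witness:
  fixes \<rho> :: "('a::finite \<times> 'b::finite, 'a \<times> 'b) op" and PA :: "(2, 'a) op"
  assumes pr: "psd \<rho>" and pa: "is_projection PA"
    and np: "\<not> psd (partial_transpose (sandwich (tensor_op PA (id_op :: ('b,'b) op)) \<rho>))"
  obtains \<phi> where "schmidt_rank 2 \<phi>" "expval (partial_transpose \<rho>) \<phi> < 0"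
proof -
  obtain \<alpha>0 \<alpha>1 where \<alpha>: "orthonormal2 \<alpha>0 \<alpha>1" and PA: "PA = proj2 \<alpha>0 \<alpha>1"
    using pa is_projection_def by blast
  define \<sigma> where "\<sigma> = sandwich (tensor_op PA (id_op :: ('b,'b) op)) \<rho>"
  obtain s0 s1 a0 a1 b0 b1 where h: "0 < s0" "0 < s1" "orthonormal2 a0 a1" "orthonormal2 b0 b1"
    and neg: "expval (partial_transpose \<sigma>) (schmidt2_vec (of_real s0) (of_real s1) a0 a1 b0 b1) < 0"
    using npt_witness_schmidt_2xm[OF _ np[folded \<sigma>_def]] psd_sandwich[OF pr] \<sigma>_def by metis
  \<comment> \<open>pull the witness back along the isometry \<open>P\<^sub>A\<^sup>\<dagger>\<close>, which preserves orthonormality\<close>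
  define a' where "a' t = op_apply (adjoint PA) t" for t
  define \<phi> where "\<phi> = schmidt2_vec (of_real s0) (of_real s1) (a' a0) (a' a1) b0 b1"
  have "\<phi> = op_apply (adjoint (tensor_op PA id_op)) (schmidt2_vec (of_real s0) (of_real s1) a0 a1 b0 b1)"
    unfolding \<phi>_def a'_def adjoint_tensor op_apply_tensor_schmidt2_vec adjoint_id op_apply_id ..
  then have "expval (partial_transpose \<rho>) \<phi> < 0"
    using neg unfolding \<sigma>_def partial_transpose_sandwich_left expval_sandwich by simp
  moreover have "orthonormal2 (a' a0) (a' a1)"
    using h(3) inner_c_adjoint_proj2[OF \<alpha>] by (simp add: orthonormal2_def a'_def PA)
  then have "schmidt_rank 2 \<phi>" unfolding schmidt_rank_2_iff \<phi>_def using h by blast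
  ultimately show ?thesis using that by blast
qed

lemma schmidt_rank2_witness_imp_npt:
  fixes \<rho> :: "('a::finite \<times> 'b::finite, 'a \<times> 'b) op"
  assumes sr: "schmidt_rank 2 \<phi>" and neg: "expval (partial_transpose \<rho>) \<phi> < 0"
  obtains PA :: "(2, 'a) op" where "is_projection PA"
    "\<not> psd (partial_transpose (sandwich (tensor_op PA (id_op :: ('b,'b) op)) \<rho>))"
proof -
  obtain s0 s1 a0 a1 b0 b1 where a: "orthonormal2 a0 a1"
    and \<phi>: "\<phi> = schmidt2_vec (of_real s0) (of_real s1) a0 a1 b0 b1"
    using sr unfolding schmidt_rank_2_iff by blast
  define PA where "PA = proj2 a0 a1"
  define \<sigma> where "\<sigma> = sandwich (tensor_op PA (id_op :: ('b,'b) op)) \<rho>"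
  have "op_apply (adjoint (tensor_op PA id_op)) (op_apply (tensor_op PA (id_op :: ('b,'b) op)) \<phi>) = \<phi>"
    unfolding \<phi> op_apply_tensor_schmidt2_vec adjoint_tensor op_apply_id adjoint_id PA_def
      op_apply_proj2_basis[OF a] op_apply_adjoint_proj2_ket ..
  then have "expval (partial_transpose \<sigma>) (op_apply (tensor_op PA id_op) \<phi>) = expval (partial_transpose \<rho>) \<phi>"
    unfolding \<sigma>_def partial_transpose_sandwich_left expval_sandwich by simp
  then have "\<not> psd (partial_transpose \<sigma>)" using neg complex_neg_not_nonneg psd_def by metis
  moreover have "is_projection PA" unfolding PA_def by (rule is_projection_proj2[OF a])
  ultimately show ?thesis using that \<sigma>_def by blast
qed

theorem lemma2:
  fixes \<rho> :: "('a::finite \<times> 'b::finite, 'a \<times> 'b) op"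
  assumes "density_matrix \<rho>"
  shows "((\<exists>PA PB. is_projection (PA :: (2, 'a) op) \<and> is_projection (PB :: (2, 'b) op) \<and>
             entangled (sandwich (tensor_op PA PB) \<rho>))
          \<longleftrightarrow>
          (\<exists>PA. is_projection (PA :: (2, 'a) op) \<and>
             \<not> psd (partial_transpose (sandwich (tensor_op PA (id_op :: ('b, 'b) op)) \<rho>))))
       \<and>
         ((\<exists>PA. is_projection (PA :: (2, 'a) op) \<and>
             \<not> psd (partial_transpose (sandwich (tensor_op PA (id_op :: ('b, 'b) op)) \<rho>)))
          \<longleftrightarrow>
          (\<exists>\<phi>. schmidt_rank 2 \<phi> \<and> expval (partial_transpose \<rho>) \<phi> < 0))"
proof -
  have pr: "psd \<rho>" using assms by (simp add: density_matrix_def)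
  show ?thesis
    using entangled_projection_imp_npt npt_imp_entangled_projection[OF pr]
      npt_imp_schmidt_rank2_witness[OF pr] schmidt_rank2_witness_imp_npt
    by metis
qed
end
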